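(* Let $S=(P,L)$ be a slim dense near hexagon with $|P|\in\{759,729,891,567,405\}$, let $t+1$ be the number of lines through each point, and let $(R,\psi)$ be a non-abelian representation of $S$ with $\psi(x)=\langle r_x\rangle$. Fix $a\in P$ and $b\in\Gamma_3(a)$. Let $\ell_1,\dots,\ell_{t+1}$ be the lines through $a$, let $x_i$ be the point of $\ell_i$ with $d(b,x_i)=2$, and let $A=\{x_i:1\leq i\leq t+1\}$. For $X\subseteq A$ put $T_X=\{r_x:x\in X\}$, $M_X=\langle T_X\rangle$ and $M=\langle r_b\rangle M_X$. Suppose $X\subseteq A$ satisfies (i) $M_X\cap Z(R)=\{1\}$ and (ii) $T_X$ is linearly independent (as a subset of the elementary abelian $2$-group $M_X$, viewed as an $\mathbb{F}_2$-vector space, with $|T_X|=|X|$). Then $|M|=2^{|X|+1}$ and $M\cap Z(R)=\{1\}$. In particular, $|R|\geq 2^{2|X|+3}$.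
   Context: A slim partial linear space has exactly $3$ points per line (two distinct points on at most one line). $d$ is distance in the collinearity graph, $\Gamma_3(a)$ the set of points at distance $3$ from $a$. A near hexagon is a connected partial linear space of diameter $3$ with no point collinear with all others such that every point has a unique nearest point on every line. A quad is a convex subset of diameter $2$ in which no point is collinear with all others; the near hexagon is dense if any two points at distance $2$ lie in a quad; in a dense near hexagon every point lies on the same number $t+1$ of lines. A representation $(R,\psi)$ of $S$ is a group $R$ with a map $\psi$ assigning to each point $x$ a subgroup $\psi(x)=\langle r_x\rangle$ of order $2$, such that $R$ is generated by the $r_x$ and, for every line $\{x,y,z\}$, $\{1,r_x,r_y,r_z\}$ is a Klein four subgroup; it is non-abelian if $R$ is. (For such representations, $r_x$ and $r_y$ commute whenever $d(x,y)\leq 2$, so $M_X$ and $M$ are elementary abelian.) *)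

theory Defs
  imports "HOL-Algebra.Generated_Groups" "HOL-Algebra.Coset"
begin

definition slim_pls :: "'p set \<Rightarrow> 'p set set \<Rightarrow> bool" where
  "slim_pls P L \<longleftrightarrow> (\<forall>l\<in>L. l \<subseteq> P \<and> card l = 3) \<and>
     (\<forall>x y l m. x \<noteq> y \<and> l \<in> L \<and> m \<in> L \<and> x \<in> l \<and> y \<in> l \<and> x \<in> m \<and> y \<in> m \<longrightarrow> l = m)"

definition collinear :: "'p set set \<Rightarrow> 'p \<Rightarrow> 'p \<Rightarrow> bool" where
  "collinear L x y \<longleftrightarrow> x \<noteq> y \<and> (\<exists>l\<in>L. x \<in> l \<and> y \<in> l)"

definition adj_rel :: "'p set set \<Rightarrow> ('p \<times> 'p) set" where
  "adj_rel L = {(x, y). collinear L x y}"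

definition gdist :: "'p set set \<Rightarrow> 'p \<Rightarrow> 'p \<Rightarrow> nat" where
  "gdist L x y = (LEAST n. (x, y) \<in> adj_rel L ^^ n)"

definition near_hexagon :: "'p set \<Rightarrow> 'p set set \<Rightarrow> bool" where
  "near_hexagon P L \<longleftrightarrow>
     slim_pls P L \<and>
     (\<forall>x\<in>P. \<forall>y\<in>P. \<exists>n. (x, y) \<in> adj_rel L ^^ n) \<and>
     (\<forall>x\<in>P. \<forall>y\<in>P. gdist L x y \<le> 3) \<and> (\<exists>x\<in>P. \<exists>y\<in>P. gdist L x y = 3) \<and>
     (\<forall>x\<in>P. \<exists>y\<in>P. y \<noteq> x \<and> \<not> collinear L x y) \<and>
     (\<forall>x\<in>P. \<forall>l\<in>L. \<exists>!y. y \<in> l \<and> (\<forall>z\<in>l. z \<noteq> y \<longrightarrow> gdist L x y < gdist L x z))"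

definition convex_sub :: "'p set \<Rightarrow> 'p set set \<Rightarrow> 'p set \<Rightarrow> bool" where
  "convex_sub P L Q \<longleftrightarrow> Q \<subseteq> P \<and>
     (\<forall>l\<in>L. (\<exists>x y. x \<noteq> y \<and> x \<in> l \<inter> Q \<and> y \<in> l \<inter> Q) \<longrightarrow> l \<subseteq> Q) \<and>
     (\<forall>x\<in>Q. \<forall>y\<in>Q. \<forall>z\<in>P. gdist L x z + gdist L z y = gdist L x y \<longrightarrow> z \<in> Q)"

definition quad :: "'p set \<Rightarrow> 'p set set \<Rightarrow> 'p set \<Rightarrow> bool" where
  "quad P L Q \<longleftrightarrow> convex_sub P L Q \<and>
     (\<forall>x\<in>Q. \<forall>y\<in>Q. gdist L x y \<le> 2) \<and> (\<exists>x\<in>Q. \<exists>y\<in>Q. gdist L x y = 2) \<and>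
     (\<forall>x\<in>Q. \<exists>y\<in>Q. y \<noteq> x \<and> \<not> collinear L x y)"

definition dense_near_hexagon :: "'p set \<Rightarrow> 'p set set \<Rightarrow> bool" where
  "dense_near_hexagon P L \<longleftrightarrow> near_hexagon P L \<and>
     (\<forall>x\<in>P. \<forall>y\<in>P. gdist L x y = 2 \<longrightarrow> (\<exists>Q. quad P L Q \<and> x \<in> Q \<and> y \<in> Q))"

definition klein_four :: "('g, 'm) monoid_scheme \<Rightarrow> 'g set \<Rightarrow> bool" where
  "klein_four R K \<longleftrightarrow> subgroup K R \<and> card K = 4 \<and> (\<forall>k\<in>K. k \<otimes>\<^bsub>R\<^esub> k = \<one>\<^bsub>R\<^esub>)"

text \<open>\<open>r x\<close> is the generator of \<open>\<psi>(x)\<close>, a subgroup of order 2.\<close>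
definition representation :: "'p set \<Rightarrow> 'p set set \<Rightarrow> ('g, 'm) monoid_scheme \<Rightarrow> ('p \<Rightarrow> 'g) \<Rightarrow> bool" where
  "representation P L R r \<longleftrightarrow> group R \<and>
     (\<forall>x\<in>P. r x \<in> carrier R \<and> r x \<noteq> \<one>\<^bsub>R\<^esub> \<and> r x \<otimes>\<^bsub>R\<^esub> r x = \<one>\<^bsub>R\<^esub>) \<and>
     carrier R = generate R (r ` P) \<and>
     (\<forall>l\<in>L. \<forall>x y z. l = {x, y, z} \<longrightarrow> klein_four R {\<one>\<^bsub>R\<^esub>, r x, r y, r z})"

definition group_center :: "('g, 'm) monoid_scheme \<Rightarrow> 'g set" where
  "group_center R = {z \<in> carrier R. \<forall>g\<in>carrier R. z \<otimes>\<^bsub>R\<^esub> g = g \<otimes>\<^bsub>R\<^esub> z}"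

text \<open>Linear independence of a subset T of an elementary abelian 2-subgroup, as an F2-vector space:
  no element lies in the span (generated subgroup) of the others.\<close>
definition F2_independent :: "('g, 'm) monoid_scheme \<Rightarrow> 'g set \<Rightarrow> bool" where
  "F2_independent R T \<longleftrightarrow> (\<forall>t\<in>T. t \<notin> generate R (T - {t}))"

end

theory Submission
  imports Defs
begin

(*
  Generators of points at distance at most 2 commute; for distance 2 this comes from the
  3 x 3 grid spanned by two common neighbours inside a quad.  The commutator
  lambda = r_p r_q r_p r_q of an opposite pair (p, q) does not depend on the pair: for fixed p it
  is constant on Gamma_3(p), which is connected under collinearity, it is unchanged when p moves
  along a line, and the collinearity graph is connected.  Consequently lambda is a central
  involution, every commutator of R lies in {1, lambda}, and lambda <> 1 because R is non-abelian.

  The element r_a commutes with M_X (all points of X are collinear with a) but not with r_b, so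
  r_b is not in M_X and no element r_b m of M is central: |M| = 2 |M_X| and M meets Z(R)
  trivially.  Finally, if an abelian subgroup M meets Z(R) trivially, counting commuting pairs in
  R x M gives |R| = |C_R(M)| |M|; since C_R(M) contains M and lambda M, |R| >= 2 |M|^2.
*)

section \<open>Groups generated by commuting involutions\<close>

lemma set_mult_iff: "x \<in> H <#>\<^bsub>G\<^esub> K \<longleftrightarrow> (\<exists>h\<in>H. \<exists>k\<in>K. x = h \<otimes>\<^bsub>G\<^esub> k)"
  unfolding set_mult_def by blast

context group
begin

lemma commute_inv_right:
  assumes "g \<in> carrier G" "h \<in> carrier G" "g \<otimes> h = h \<otimes> g"
  shows "g \<otimes> inv h = inv h \<otimes> g"
proof -
  have "inv h \<otimes> g = inv h \<otimes> (g \<otimes> h) \<otimes> inv h"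
    using assms(1,2) by (simp add: m_assoc)
  also have "\<dots> = g \<otimes> inv h"
    using assms by (simp add: m_assoc[symmetric])
  finally show ?thesis by simp
qed

lemma commute_generate:
  assumes g: "g \<in> carrier G" and S: "S \<subseteq> carrier G"
    and comm: "\<And>s. s \<in> S \<Longrightarrow> g \<otimes> s = s \<otimes> g" and h: "h \<in> generate G S"
  shows "g \<otimes> h = h \<otimes> g"
  using h
proof (induction rule: generate.induct)
  case (inv s)
  then show ?case using commute_inv_right g S comm by blast
next
  case (eng h1 h2)
  have "h1 \<in> carrier G" "h2 \<in> carrier G"
    using eng.hyps generate_in_carrier S by auto
  with eng.IH g show ?case by (metis m_assoc)
qed (use g comm in auto)

lemma generate_commute:
  assumes S: "S \<subseteq> carrier G" and comm: "\<And>s t. s \<in> S \<Longrightarrow> t \<in> S \<Longrightarrow> s \<otimes> t = t \<otimes> s"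
    and g: "g \<in> generate G S" and h: "h \<in> generate G S"
  shows "g \<otimes> h = h \<otimes> g"
proof -
  have "s \<otimes> h = h \<otimes> s" if "s \<in> S" for s
    using commute_generate[OF _ S _ h] that S comm by blast
  then show ?thesis
    using commute_generate[OF generate_in_carrier[OF S h] S _ g] by metis
qed

lemma subgroup_involution:
  assumes "t \<in> carrier G" "t \<otimes> t = \<one>"
  shows "subgroup {\<one>, t} G"
  using assms inv_equality[of t t] by unfold_locales auto

lemma subgroup_set_mult_commuting:
  assumes H: "subgroup H G" and K: "subgroup K G"
    and comm: "\<And>h k. h \<in> H \<Longrightarrow> k \<in> K \<Longrightarrow> h \<otimes> k = k \<otimes> h"
  shows "subgroup (H <#> K) G"
proof (rule subgroup.intro)
  show "H <#> K \<subseteq> carrier G"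
    using H K by (simp add: setmult_subset_G subgroup.subset)
  have "\<one> \<otimes> \<one> \<in> H <#> K"
    using subgroup.one_closed[OF H] subgroup.one_closed[OF K] unfolding set_mult_iff by blast
  then show "\<one> \<in> H <#> K" by simp
next
  fix x y assume "x \<in> H <#> K" "y \<in> H <#> K"
  then obtain h1 k1 h2 k2
    where hk: "h1 \<in> H" "k1 \<in> K" "h2 \<in> H" "k2 \<in> K" and xy: "x = h1 \<otimes> k1" "y = h2 \<otimes> k2"
    unfolding set_mult_iff by blast
  have carr: "h1 \<in> carrier G" "k1 \<in> carrier G" "h2 \<in> carrier G" "k2 \<in> carrier G"
    using subgroup.mem_carrier[OF H] subgroup.mem_carrier[OF K] hk by auto
  have "x \<otimes> y = h1 \<otimes> (k1 \<otimes> h2) \<otimes> k2"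
    using xy carr by (simp add: m_assoc)
  also have "\<dots> = h1 \<otimes> (h2 \<otimes> k1) \<otimes> k2"
    using comm[OF hk(3,2)] by simp
  also have "\<dots> = (h1 \<otimes> h2) \<otimes> (k1 \<otimes> k2)"
    using carr by (simp add: m_assoc)
  finally show "x \<otimes> y \<in> H <#> K"
    using subgroup.m_closed[OF H hk(1,3)] subgroup.m_closed[OF K hk(2,4)] unfolding set_mult_iff by blast
next
  fix x assume "x \<in> H <#> K"
  then obtain h k where hk: "h \<in> H" "k \<in> K" and x: "x = h \<otimes> k"
    unfolding set_mult_iff by blast
  have carr: "h \<in> carrier G" "k \<in> carrier G"
    using subgroup.mem_carrier[OF H] subgroup.mem_carrier[OF K] hk by auto
  have "inv x = inv h \<otimes> inv k"
    using x carr comm[OF hk] by (metis inv_mult_group)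
  then show "inv x \<in> H <#> K"
    using subgroup.m_inv_closed[OF H hk(1)] subgroup.m_inv_closed[OF K hk(2)] unfolding set_mult_iff by blast
qed

lemma generate_insert_commuting_involution:
  assumes S: "S \<subseteq> carrier G" and t: "t \<in> carrier G" "t \<otimes> t = \<one>"
    and comm: "\<And>s. s \<in> S \<Longrightarrow> t \<otimes> s = s \<otimes> t"
  shows "generate G (insert t S) = {\<one>, t} <#> generate G S"
proof
  have "c \<otimes> h = h \<otimes> c" if "c \<in> {\<one>, t}" "h \<in> generate G S" for c h
    using that commute_generate[OF t(1) S comm] generate_in_carrier[OF S] by auto
  then have "subgroup ({\<one>, t} <#> generate G S) G"
    by (rule subgroup_set_mult_commuting[OF subgroup_involution[OF t] generate_is_subgroup[OF S]])
  moreover have "insert t S \<subseteq> {\<one>, t} <#> generate G S"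
  proof (intro insert_subsetI subsetI)
    have "t \<otimes> \<one> \<in> {\<one>, t} <#> generate G S"
      using generate.one[of G S] unfolding set_mult_iff by blast
    then show "t \<in> {\<one>, t} <#> generate G S"
      using t by simp
    fix s assume s: "s \<in> S"
    then have "\<one> \<otimes> s \<in> {\<one>, t} <#> generate G S"
      using generate.incl[of s S G] unfolding set_mult_iff by blast
    then show "s \<in> {\<one>, t} <#> generate G S"
      using s S by auto
  qed
  ultimately show "generate G (insert t S) \<subseteq> {\<one>, t} <#> generate G S"
    by (rule generate_subgroup_incl[rotated])
next
  have sub: "subgroup (generate G (insert t S)) G"
    using S t by (intro generate_is_subgroup) auto
  have "{\<one>, t} \<subseteq> generate G (insert t S)" "generate G S \<subseteq> generate G (insert t S)"
    using generate.one generate.incl[of t "insert t S"] mono_generate[of S "insert t S"] by auto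
  then show "{\<one>, t} <#> generate G S \<subseteq> generate G (insert t S)"
    using subgroup.m_closed[OF sub] unfolding set_mult_def by auto
qed

lemma card_set_mult_involution:
  assumes H: "subgroup H G" "finite H" and t: "t \<in> carrier G" "t \<notin> H"
  shows "card ({\<one>, t} <#> H) = 2 * card H"
proof -
  have carr: "\<And>h. h \<in> H \<Longrightarrow> h \<in> carrier G" using subgroup.mem_carrier[OF H(1)] .
  have eq: "{\<one>, t} <#> H = H \<union> (\<otimes>) t ` H"
    unfolding set_mult_def using carr by auto
  have "(\<otimes>) t ` H \<inter> H = {}"
  proof (rule ccontr)
    assume "(\<otimes>) t ` H \<inter> H \<noteq> {}"
    then obtain h where h: "h \<in> H" "t \<otimes> h \<in> H" by blast
    then have "(t \<otimes> h) \<otimes> inv h \<in> H"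
      using subgroup.m_closed[OF H(1)] subgroup.m_inv_closed[OF H(1)] by blast
    then show False using t h carr by (simp add: m_assoc)
  qed
  moreover have "inj_on ((\<otimes>) t) H"
    using t carr by (intro inj_onI) simp
  ultimately show ?thesis
    unfolding eq using H(2) card_Un_disjoint[of H "(\<otimes>) t ` H"] card_image[of "(\<otimes>) t" H]
    by (simp add: Int_commute)
qed

lemma card_generate_independent_involutions:
  assumes "finite T" "T \<subseteq> carrier G" "\<And>s. s \<in> T \<Longrightarrow> s \<otimes> s = \<one>"
    and "\<And>s u. s \<in> T \<Longrightarrow> u \<in> T \<Longrightarrow> s \<otimes> u = u \<otimes> s"
    and "F2_independent G T"
  shows "finite (generate G T) \<and> card (generate G T) = 2 ^ card T"
  using assms
proof (induction T rule: finite_induct)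
  case empty
  then show ?case by (simp add: generate_empty)
next
  case (insert t F)
  have F: "F \<subseteq> carrier G" using insert.prems(1) by simp
  have "F2_independent G F"
    using insert.prems(4) mono_generate[of "F - {_}" "insert t F - {_}"]
    unfolding F2_independent_def by blast
  then have IH: "finite (generate G F)" "card (generate G F) = 2 ^ card F"
    using insert by blast+
  have "t \<notin> generate G (insert t F - {t})"
    using insert.prems(4) unfolding F2_independent_def by blast
  then have t: "t \<in> carrier G" "t \<notin> generate G F"
    using insert.prems(1) insert.hyps(2) by simp_all
  have eq: "generate G (insert t F) = {\<one>, t} <#> generate G F"
    using insert.prems by (intro generate_insert_commuting_involution) auto
  have "card ({\<one>, t} <#> generate G F) = 2 ^ card (insert t F)"
    using card_set_mult_involution[OF generate_is_subgroup[OF F] IH(1) t] IH(2) insert.hyps(1,2)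
    by simp
  moreover have "finite ({\<one>, t} <#> generate G F)"
    unfolding set_mult_def using IH(1) by blast
  ultimately show ?case
    unfolding eq by blast
qed

lemma involutions_commute_iff:
  assumes carr: "a \<in> carrier G" "b \<in> carrier G" and inv: "a \<otimes> a = \<one>" "b \<otimes> b = \<one>"
  shows "a \<otimes> b = b \<otimes> a \<longleftrightarrow> a \<otimes> b \<otimes> a \<otimes> b = \<one>"
proof -
  have "inv (a \<otimes> b) = b \<otimes> a"
    using carr inv inv_equality[of a a] inv_equality[of b b] by (simp add: inv_mult_group)
  moreover have "a \<otimes> b \<otimes> a \<otimes> b = (a \<otimes> b) \<otimes> (a \<otimes> b)"
    using carr by (simp add: m_assoc)
  ultimately show ?thesis
    using carr inv_equality[of "a \<otimes> b" "a \<otimes> b"] by (metis m_closed r_inv)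
qed

lemma involutions_mult_eq_commutator_mult:
  assumes carr: "a \<in> carrier G" "b \<in> carrier G" and inv: "a \<otimes> a = \<one>" "b \<otimes> b = \<one>"
  shows "a \<otimes> b = (a \<otimes> b \<otimes> a \<otimes> b) \<otimes> (b \<otimes> a)"
proof -
  have "(a \<otimes> b \<otimes> a \<otimes> b) \<otimes> (b \<otimes> a) = a \<otimes> b \<otimes> a \<otimes> (b \<otimes> b) \<otimes> a"
    using carr by (simp add: m_assoc)
  also have "\<dots> = a \<otimes> b"
    using carr inv by (simp add: m_assoc)
  finally show ?thesis by simp
qed

lemma involution_commute_commutator:
  assumes carr: "a \<in> carrier G" "b \<in> carrier G" and inv: "a \<otimes> a = \<one>"
  shows "a \<otimes> (a \<otimes> b \<otimes> a \<otimes> b) = (b \<otimes> a \<otimes> b \<otimes> a) \<otimes> a"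
proof -
  have "a \<otimes> (a \<otimes> b \<otimes> a \<otimes> b) = (a \<otimes> a) \<otimes> (b \<otimes> a \<otimes> b)" using carr by (simp add: m_assoc)
  also have "\<dots> = (b \<otimes> a \<otimes> b) \<otimes> (a \<otimes> a)" using carr inv by simp
  also have "\<dots> = (b \<otimes> a \<otimes> b \<otimes> a) \<otimes> a" using carr by (simp add: m_assoc)
  finally show ?thesis .
qed

lemma inv_involutions_commutator:
  assumes carr: "a \<in> carrier G" "b \<in> carrier G" and inv: "a \<otimes> a = \<one>" "b \<otimes> b = \<one>"
  shows "inv (b \<otimes> a \<otimes> b \<otimes> a) = a \<otimes> b \<otimes> a \<otimes> b"
  using carr inv inv_equality[of a a] inv_equality[of b b] by (simp add: inv_mult_group m_assoc)

lemma commutator_mult_commuting_involution: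
  assumes carr: "a \<in> carrier G" "b \<in> carrier G" "w \<in> carrier G"
    and w: "w \<otimes> w = \<one>" "a \<otimes> w = w \<otimes> a" "b \<otimes> w = w \<otimes> b"
  shows "a \<otimes> (b \<otimes> w) \<otimes> a \<otimes> (b \<otimes> w) = a \<otimes> b \<otimes> a \<otimes> b"
proof -
  have "a \<otimes> (b \<otimes> w) \<otimes> a \<otimes> (b \<otimes> w) = a \<otimes> (b \<otimes> ((w \<otimes> a) \<otimes> (b \<otimes> w)))"
    using carr by (simp add: m_assoc)
  also have "\<dots> = a \<otimes> (b \<otimes> ((a \<otimes> w) \<otimes> (b \<otimes> w)))"
    using w(2) by simp
  also have "\<dots> = a \<otimes> (b \<otimes> (a \<otimes> ((w \<otimes> b) \<otimes> w)))"
    using carr by (simp add: m_assoc)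
  also have "\<dots> = a \<otimes> (b \<otimes> (a \<otimes> ((b \<otimes> w) \<otimes> w)))"
    using w(3) by simp
  also have "\<dots> = a \<otimes> (b \<otimes> (a \<otimes> (b \<otimes> (w \<otimes> w))))"
    using carr by (simp add: m_assoc)
  also have "\<dots> = a \<otimes> b \<otimes> a \<otimes> b"
    using carr w(1) by (simp add: m_assoc)
  finally show ?thesis .
qed

(* For non-collinear points x, y of a 3 x 3 grid with common neighbours c1, c2, take
   a, b, c, e = r x, r c1, r c2, r y: both sides of "grid" equal r z, where z is the point of the
   grid collinear with neither x nor y. *)
lemma commute_if_grid_relations:
  assumes carr: "a \<in> carrier G" "b \<in> carrier G" "c \<in> carrier G" "e \<in> carrier G"
    and ab: "a \<otimes> b = b \<otimes> a" and ac: "a \<otimes> c = c \<otimes> a" and eb: "e \<otimes> b = b \<otimes> e" and ec: "e \<otimes> c = c \<otimes> e"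
    and grid: "(a \<otimes> b) \<otimes> (e \<otimes> c) = (a \<otimes> c) \<otimes> (e \<otimes> b)"
    and comm: "(a \<otimes> c) \<otimes> (e \<otimes> b) = (e \<otimes> b) \<otimes> (a \<otimes> c)"
  shows "a \<otimes> e = e \<otimes> a"
proof -
  have "a \<otimes> (b \<otimes> (e \<otimes> c)) = a \<otimes> (c \<otimes> (e \<otimes> b))"
    using grid carr by (simp add: m_assoc)
  then have "b \<otimes> (e \<otimes> c) = c \<otimes> (e \<otimes> b)" using carr by simp
  then have "e \<otimes> (b \<otimes> c) = e \<otimes> (c \<otimes> b)"
    using carr eb ec by (simp add: m_assoc[symmetric])
  then have bc: "b \<otimes> c = c \<otimes> b" using carr by simp
  have "(a \<otimes> c) \<otimes> (e \<otimes> b) = a \<otimes> ((c \<otimes> e) \<otimes> b)" using carr by (simp add: m_assoc)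
  also have "\<dots> = a \<otimes> ((e \<otimes> c) \<otimes> b)" using ec by simp
  also have "\<dots> = a \<otimes> (e \<otimes> (c \<otimes> b))" using carr by (simp add: m_assoc)
  also have "\<dots> = ((a \<otimes> e) \<otimes> b) \<otimes> c" using bc carr by (simp add: m_assoc)
  finally have ace: "(a \<otimes> c) \<otimes> (e \<otimes> b) = ((a \<otimes> e) \<otimes> b) \<otimes> c" .
  have "(e \<otimes> b) \<otimes> (a \<otimes> c) = e \<otimes> ((b \<otimes> a) \<otimes> c)" using carr by (simp add: m_assoc)
  also have "\<dots> = e \<otimes> ((a \<otimes> b) \<otimes> c)" using ab by simp
  also have "\<dots> = ((e \<otimes> a) \<otimes> b) \<otimes> c" using carr by (simp add: m_assoc)
  finally show ?thesis using comm ace carr by simp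
qed

lemma set_mult_involution_inter_center:
  assumes H: "subgroup H G" and t: "t \<in> carrier G"
    and g: "g \<in> carrier G" "\<And>h. h \<in> H \<Longrightarrow> g \<otimes> h = h \<otimes> g" "g \<otimes> t \<noteq> t \<otimes> g"
  shows "({\<one>, t} <#> H) \<inter> group_center G = H \<inter> group_center G"
proof
  show "H \<inter> group_center G \<subseteq> ({\<one>, t} <#> H) \<inter> group_center G"
  proof
    fix h assume h: "h \<in> H \<inter> group_center G"
    then have "\<one> \<otimes> h \<in> {\<one>, t} <#> H" unfolding set_mult_iff by blast
    then show "h \<in> ({\<one>, t} <#> H) \<inter> group_center G"
      using h subgroup.mem_carrier[OF H] by auto
  qed
  show "({\<one>, t} <#> H) \<inter> group_center G \<subseteq> H \<inter> group_center G"
  proof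
    fix y assume y: "y \<in> ({\<one>, t} <#> H) \<inter> group_center G"
    then have "y \<in> {\<one>, t} <#> H" by blast
    then obtain c h where ch: "c \<in> {\<one>, t}" "h \<in> H" "y = c \<otimes> h"
      unfolding set_mult_iff by blast
    have hc: "h \<in> carrier G" using subgroup.mem_carrier[OF H ch(2)] .
    have "c \<noteq> t"
    proof
      assume "c = t"
      have "(t \<otimes> g) \<otimes> h = t \<otimes> (h \<otimes> g)" using g(1,2) ch(2) hc t by (simp add: m_assoc)
      also have "\<dots> = y \<otimes> g" using ch(3) \<open>c = t\<close> g(1) hc t by (simp add: m_assoc)
      also have "\<dots> = g \<otimes> y" using y g(1) unfolding group_center_def by blast
      also have "\<dots> = (g \<otimes> t) \<otimes> h" using ch(3) \<open>c = t\<close> g(1) hc t by (simp add: m_assoc)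
      finally show False using g hc t by simp
    qed
    then show "y \<in> H \<inter> group_center G" using y ch hc by auto
  qed
qed

lemma extension_by_commuting_involution:
  assumes S: "finite S" "S \<subseteq> carrier G" "\<And>s. s \<in> S \<Longrightarrow> s \<otimes> s = \<one>"
      "\<And>s u. s \<in> S \<Longrightarrow> u \<in> S \<Longrightarrow> s \<otimes> u = u \<otimes> s" "F2_independent G S"
    and t: "t \<in> carrier G" "t \<otimes> t = \<one>" "\<And>s. s \<in> S \<Longrightarrow> t \<otimes> s = s \<otimes> t"
    and g: "g \<in> carrier G" "\<And>s. s \<in> S \<Longrightarrow> g \<otimes> s = s \<otimes> g" "g \<otimes> t \<noteq> t \<otimes> g"
  shows "{\<one>, t} <#> generate G S = generate G (insert t S)"
    and "card ({\<one>, t} <#> generate G S) = 2 ^ (card S + 1)"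
    and "({\<one>, t} <#> generate G S) \<inter> group_center G = generate G S \<inter> group_center G"
proof -
  have gS: "\<And>h. h \<in> generate G S \<Longrightarrow> g \<otimes> h = h \<otimes> g"
    using commute_generate[OF g(1) S(2) g(2)] .
  then have "t \<notin> generate G S" using g(3) by blast
  then show "card ({\<one>, t} <#> generate G S) = 2 ^ (card S + 1)"
    using card_set_mult_involution[OF generate_is_subgroup[OF S(2)] _ t(1)]
      card_generate_independent_involutions[OF S] by simp
  show "{\<one>, t} <#> generate G S = generate G (insert t S)"
    using generate_insert_commuting_involution[OF S(2) t] by simp
  show "({\<one>, t} <#> generate G S) \<inter> group_center G = generate G S \<inter> group_center G"
    using set_mult_involution_inter_center[OF generate_is_subgroup[OF S(2)] t(1) g(1) gS g(3)] .
qed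

end

section \<open>Groups whose commutators lie in a central subgroup of order two\<close>

lemma card_eq_double_if_swap:
  assumes "finite A" "B \<subseteq> A" "inj_on f A" "f ` B \<subseteq> A - B" "f ` (A - B) \<subseteq> B"
  shows "card A = 2 * card B"
proof -
  have "card B \<le> card (A - B)" "card (A - B) \<le> card B"
    using assms finite_subset inj_on_subset[OF assms(3)]
    by (meson Diff_subset card_inj_on_le finite_Diff)+
  moreover have "card A = card B + card (A - B)"
    using assms(1,2) by (metis card_Diff_subset finite_subset card_mono le_add_diff_inverse)
  ultimately show ?thesis by linarith
qed

lemma sum_card_filter_swap:
  assumes "finite A" "finite B"
  shows "(\<Sum>a\<in>A. card {b \<in> B. P a b}) = (\<Sum>b\<in>B. card {a \<in> A. P a b})"
proof -
  have "(\<Sum>a\<in>A. card {b \<in> B. P a b}) = (\<Sum>a\<in>A. \<Sum>b\<in>B. of_bool (P a b))"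
    using assms by (simp add: Int_def conj_commute)
  also have "\<dots> = (\<Sum>b\<in>B. \<Sum>a\<in>A. of_bool (P a b))"
    by (rule sum.swap)
  also have "\<dots> = (\<Sum>b\<in>B. card {a \<in> A. P a b})"
    using assms by (simp add: Int_def conj_commute)
  finally show ?thesis .
qed

definition commute_up_to :: "('g, 'm) monoid_scheme \<Rightarrow> 'g \<Rightarrow> 'g \<Rightarrow> 'g \<Rightarrow> bool" where
  "commute_up_to G z g h \<longleftrightarrow> (\<exists>c\<in>{\<one>\<^bsub>G\<^esub>, z}. g \<otimes>\<^bsub>G\<^esub> h = c \<otimes>\<^bsub>G\<^esub> (h \<otimes>\<^bsub>G\<^esub> g))"

context group
begin

lemma mult_twisted_commute:
  assumes carr: "g \<in> carrier G" "h \<in> carrier G" "x \<in> carrier G"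
    and c: "c \<in> group_center G" "c' \<in> group_center G"
    and gx: "g \<otimes> x = c \<otimes> (x \<otimes> g)" and hx: "h \<otimes> x = c' \<otimes> (x \<otimes> h)"
  shows "(g \<otimes> h) \<otimes> x = (c \<otimes> c') \<otimes> (x \<otimes> (g \<otimes> h))"
proof -
  have cc: "c \<in> carrier G" "c' \<in> carrier G" "\<And>y. y \<in> carrier G \<Longrightarrow> c' \<otimes> y = y \<otimes> c'"
    using c unfolding group_center_def by auto
  have "(g \<otimes> h) \<otimes> x = g \<otimes> c' \<otimes> (x \<otimes> h)"
    using carr cc hx by (simp add: m_assoc)
  also have "\<dots> = c' \<otimes> (g \<otimes> x) \<otimes> h"
    using carr cc by (simp add: m_assoc)
  also have "\<dots> = (c \<otimes> c') \<otimes> (x \<otimes> (g \<otimes> h))"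
    using carr cc gx by (simp add: m_assoc)
  finally show ?thesis .
qed

lemma central_involution_pair:
  assumes "z \<in> group_center G" "z \<otimes> z = \<one>"
  shows "\<And>c. c \<in> {\<one>, z} \<Longrightarrow> c \<in> group_center G \<and> c \<otimes> c = \<one>"
    and "\<And>c c'. c \<in> {\<one>, z} \<Longrightarrow> c' \<in> {\<one>, z} \<Longrightarrow> c \<otimes> c' \<in> {\<one>, z}"
proof -
  have "z \<in> carrier G" "\<one> \<in> group_center G"
    using assms(1) unfolding group_center_def by auto
  then show "\<And>c. c \<in> {\<one>, z} \<Longrightarrow> c \<in> group_center G \<and> c \<otimes> c = \<one>"
    and "\<And>c c'. c \<in> {\<one>, z} \<Longrightarrow> c' \<in> {\<one>, z} \<Longrightarrow> c \<otimes> c' \<in> {\<one>, z}"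
    using assms by auto
qed

lemma commute_up_to_sym:
  assumes z: "z \<in> group_center G" "z \<otimes> z = \<one>" and carr: "g \<in> carrier G" "h \<in> carrier G"
    and "commute_up_to G z g h"
  shows "commute_up_to G z h g"
proof -
  obtain c where c: "c \<in> {\<one>, z}" "g \<otimes> h = c \<otimes> (h \<otimes> g)"
    using assms(5) unfolding commute_up_to_def by blast
  have cc: "c \<in> carrier G" "c \<otimes> c = \<one>"
    using central_involution_pair(1)[OF z c(1)] unfolding group_center_def by auto
  have "c \<otimes> (g \<otimes> h) = (c \<otimes> c) \<otimes> (h \<otimes> g)"
    using c(2) carr cc(1) by (simp add: m_assoc)
  then have "h \<otimes> g = c \<otimes> (g \<otimes> h)"
    using cc carr by simp
  then show ?thesis
    using c(1) unfolding commute_up_to_def by blast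
qed

lemma commute_up_to_mult:
  assumes z: "z \<in> group_center G" "z \<otimes> z = \<one>" and carr: "g \<in> carrier G" "h \<in> carrier G" "x \<in> carrier G"
    and "commute_up_to G z g x" "commute_up_to G z h x"
  shows "commute_up_to G z (g \<otimes> h) x"
proof -
  obtain c c' where c: "c \<in> {\<one>, z}" "g \<otimes> x = c \<otimes> (x \<otimes> g)" "c' \<in> {\<one>, z}" "h \<otimes> x = c' \<otimes> (x \<otimes> h)"
    using assms(6,7) unfolding commute_up_to_def by blast
  have "(g \<otimes> h) \<otimes> x = (c \<otimes> c') \<otimes> (x \<otimes> (g \<otimes> h))"
    using mult_twisted_commute[OF carr _ _ c(2) c(4)] central_involution_pair(1)[OF z] c(1,3) by blast
  then show ?thesis
    using central_involution_pair(2)[OF z c(1,3)] unfolding commute_up_to_def by blast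
qed

lemma commute_up_to_generate_left:
  assumes z: "z \<in> group_center G" "z \<otimes> z = \<one>"
    and S: "S \<subseteq> carrier G" "\<And>s. s \<in> S \<Longrightarrow> s \<otimes> s = \<one>"
    and x: "x \<in> carrier G" "\<And>s. s \<in> S \<Longrightarrow> commute_up_to G z s x"
    and g: "g \<in> generate G S"
  shows "commute_up_to G z g x"
  using g
proof (induction rule: generate.induct)
  case one
  show ?case using x(1) unfolding commute_up_to_def by force
next
  case (incl s)
  then show ?case using x(2) by blast
next
  case (inv s)
  then show ?case using x(2) S inv_equality by (metis subsetD)
next
  case (eng g h)
  then show ?case
    using commute_up_to_mult[OF z _ _ x(1)] generate_in_carrier[OF S(1)] by blast
qed

lemma commute_up_to_generate:
  assumes z: "z \<in> group_center G" "z \<otimes> z = \<one>"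
    and S: "S \<subseteq> carrier G" "\<And>s. s \<in> S \<Longrightarrow> s \<otimes> s = \<one>"
    and comm: "\<And>s t. s \<in> S \<Longrightarrow> t \<in> S \<Longrightarrow> commute_up_to G z s t"
    and g: "g \<in> generate G S" and h: "h \<in> generate G S"
  shows "commute_up_to G z g h"
proof -
  have hc: "h \<in> carrier G" using generate_in_carrier[OF S(1) h] .
  have "commute_up_to G z h s" if "s \<in> S" for s
    using commute_up_to_generate_left[OF z S _ _ h] comm that S(1) by blast
  then have "commute_up_to G z s h" if "s \<in> S" for s
    using commute_up_to_sym[OF z hc] that S(1) by blast
  then show ?thesis
    using commute_up_to_generate_left[OF z S hc _ g] by blast
qed

lemma card_centralizer_in_subgroup:
  assumes H: "subgroup H G" "finite H"
    and z: "z \<in> group_center G" "z \<otimes> z = \<one>" "z \<noteq> \<one>"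
    and x: "x \<in> carrier G" and cu: "\<And>h. h \<in> H \<Longrightarrow> commute_up_to G z h x"
    and h0: "h0 \<in> H" "h0 \<otimes> x \<noteq> x \<otimes> h0"
  shows "card H = 2 * card {h \<in> H. h \<otimes> x = x \<otimes> h}"
proof (rule card_eq_double_if_swap)
  have carr: "\<And>h. h \<in> H \<Longrightarrow> h \<in> carrier G" using subgroup.mem_carrier[OF H(1)] .
  have zc: "z \<in> carrier G" "\<one> \<in> group_center G" using z(1) unfolding group_center_def by auto
  have anti: "h \<otimes> x = z \<otimes> (x \<otimes> h)" if "h \<in> H" "h \<otimes> x \<noteq> x \<otimes> h" for h
    using cu[OF that(1)] that(2) carr[OF that(1)] x unfolding commute_up_to_def by auto
  have h0x: "h0 \<otimes> x = z \<otimes> (x \<otimes> h0)" using anti h0 by blast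
  let ?C = "{h \<in> H. h \<otimes> x = x \<otimes> h}"
  show "finite H" "?C \<subseteq> H" by (auto simp: H(2))
  show "inj_on (\<lambda>h. h \<otimes> h0) H"
    using carr h0(1) by (intro inj_onI) simp
  show "(\<lambda>h. h \<otimes> h0) ` ?C \<subseteq> H - ?C"
  proof (rule image_subsetI)
    fix h assume "h \<in> ?C"
    then have h: "h \<in> H" "h \<otimes> x = x \<otimes> h" by auto
    then have "(h \<otimes> h0) \<otimes> x = (\<one> \<otimes> z) \<otimes> (x \<otimes> (h \<otimes> h0))"
      using mult_twisted_commute[OF carr carr x zc(2) z(1) _ h0x] h0(1) x carr by simp
    moreover have "x \<otimes> (h \<otimes> h0) \<in> carrier G" using x carr h h0 by simp
    ultimately have "(h \<otimes> h0) \<otimes> x \<noteq> x \<otimes> (h \<otimes> h0)"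
      using z(3) zc(1) by (metis l_one r_cancel_one)
    then show "h \<otimes> h0 \<in> H - ?C"
      using subgroup.m_closed[OF H(1) h(1) h0(1)] by blast
  qed
  show "(\<lambda>h. h \<otimes> h0) ` (H - ?C) \<subseteq> ?C"
  proof (rule image_subsetI)
    fix h assume "h \<in> H - ?C"
    then have h: "h \<in> H" "h \<otimes> x \<noteq> x \<otimes> h" by auto
    then have "(h \<otimes> h0) \<otimes> x = (z \<otimes> z) \<otimes> (x \<otimes> (h \<otimes> h0))"
      using mult_twisted_commute[OF carr carr x z(1) z(1) anti h0x] h0(1) by blast
    then show "h \<otimes> h0 \<in> ?C"
      using subgroup.m_closed[OF H(1) h(1) h0(1)] z(2) x carr h h0 by simp
  qed
qed

lemma double_card_centralizer_in_subgroup: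
  assumes H: "subgroup H G" "finite H"
    and z: "z \<in> group_center G" "z \<otimes> z = \<one>" "z \<noteq> \<one>"
    and x: "x \<in> carrier G" and cu: "\<And>h. h \<in> H \<Longrightarrow> commute_up_to G z h x"
  shows "2 * card {h \<in> H. h \<otimes> x = x \<otimes> h} = card H + (if \<forall>h\<in>H. h \<otimes> x = x \<otimes> h then card H else 0)"
proof (cases "\<forall>h\<in>H. h \<otimes> x = x \<otimes> h")
  case True
  then have "{h \<in> H. h \<otimes> x = x \<otimes> h} = H" by auto
  then show ?thesis using True by simp
next
  case False
  then obtain h0 where "h0 \<in> H" "h0 \<otimes> x \<noteq> x \<otimes> h0" by blast
  then have "card H = 2 * card {h \<in> H. h \<otimes> x = x \<otimes> h}"
    using card_centralizer_in_subgroup[OF H z x cu] by blast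
  then show ?thesis by (simp only: if_not_P[OF False])
qed

(* Count commuting pairs in G x M: every m <> 1 commutes with half of G, and every g outside
   the centralizer of M commutes with half of M. *)
lemma card_carrier_eq_card_centralizer_mult:
  assumes fin: "finite (carrier G)" and M: "subgroup M G"
    and z: "z \<in> group_center G" "z \<otimes> z = \<one>" "z \<noteq> \<one>"
    and cu: "\<And>g h. g \<in> carrier G \<Longrightarrow> h \<in> carrier G \<Longrightarrow> commute_up_to G z g h"
    and MZ: "M \<inter> group_center G = {\<one>}"
  shows "card (carrier G) = card {g \<in> carrier G. \<forall>m\<in>M. g \<otimes> m = m \<otimes> g} * card M"
proof -
  let ?C = "{g \<in> carrier G. \<forall>m\<in>M. g \<otimes> m = m \<otimes> g}"
  have Mc: "M \<subseteq> carrier G" and finM: "finite M" and oneM: "\<one> \<in> M"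
    using subgroup.subset[OF M] fin finite_subset subgroup.one_closed[OF M] by auto
  have "(\<forall>g\<in>carrier G. g \<otimes> m = m \<otimes> g) \<longleftrightarrow> m = \<one>" if "m \<in> M" for m
    using MZ that Mc unfolding group_center_def by auto
  then have "2 * card {g \<in> carrier G. g \<otimes> m = m \<otimes> g} = card (carrier G) + (if m = \<one> then card (carrier G) else 0)"
    if "m \<in> M" for m
    using double_card_centralizer_in_subgroup[OF subgroup_self fin z] that Mc cu by auto
  then have sumM: "2 * (\<Sum>m\<in>M. card {g \<in> carrier G. g \<otimes> m = m \<otimes> g}) = card M * card (carrier G) + card (carrier G)"
    using finM oneM by (simp add: sum_distrib_left sum.distrib)
  have "2 * card {m \<in> M. m \<otimes> g = g \<otimes> m} = card M + (if g \<in> ?C then card M else 0)"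
    if g: "g \<in> carrier G" for g
  proof -
    have "(\<forall>m\<in>M. m \<otimes> g = g \<otimes> m) \<longleftrightarrow> g \<in> ?C" using g by auto
    moreover have "\<And>m. m \<in> M \<Longrightarrow> commute_up_to G z m g" using cu g Mc by blast
    ultimately show ?thesis
      using double_card_centralizer_in_subgroup[OF M finM z g] by (simp only:)
  qed
  moreover have "(\<Sum>g\<in>carrier G. if g \<in> ?C then card M else 0) = card ?C * card M"
    using fin by (simp add: sum.inter_filter[symmetric])
  ultimately have sumG: "2 * (\<Sum>g\<in>carrier G. card {m \<in> M. m \<otimes> g = g \<otimes> m}) = card (carrier G) * card M + card ?C * card M"
    by (simp add: sum_distrib_left sum.distrib)
  have "{g \<in> carrier G. m \<otimes> g = g \<otimes> m} = {g \<in> carrier G. g \<otimes> m = m \<otimes> g}" for m by auto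
  then have "(\<Sum>g\<in>carrier G. card {m \<in> M. m \<otimes> g = g \<otimes> m}) = (\<Sum>m\<in>M. card {g \<in> carrier G. g \<otimes> m = m \<otimes> g})"
    using sum_card_filter_swap[OF fin finM, of "\<lambda>g m. m \<otimes> g = g \<otimes> m"] by simp
  with sumM sumG have "card (carrier G) * card M + card (carrier G) = card (carrier G) * card M + card ?C * card M"
    by (simp add: mult.commute)
  then show ?thesis by simp
qed

lemma set_mult_central_subset_centralizer:
  assumes Z: "Z \<subseteq> group_center G" and M: "M \<subseteq> carrier G"
    and Mab: "\<And>m n. m \<in> M \<Longrightarrow> n \<in> M \<Longrightarrow> m \<otimes> n = n \<otimes> m"
  shows "Z <#> M \<subseteq> {g \<in> carrier G. \<forall>n\<in>M. g \<otimes> n = n \<otimes> g}"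
proof
  fix g assume "g \<in> Z <#> M"
  then obtain c m where c: "c \<in> Z" "m \<in> M" "g = c \<otimes> m"
    unfolding set_mult_iff by blast
  have cc: "c \<in> carrier G" "\<And>y. y \<in> carrier G \<Longrightarrow> c \<otimes> y = y \<otimes> c"
    using c(1) Z unfolding group_center_def by auto
  have "g \<otimes> n = n \<otimes> g" if n: "n \<in> M" for n
  proof -
    have "g \<otimes> n = c \<otimes> (n \<otimes> m)"
      using c(2,3) n cc(1) M Mab by (simp add: m_assoc subsetD)
    also have "\<dots> = (n \<otimes> c) \<otimes> m"
      using c(2) n cc M by (simp add: m_assoc[symmetric] subsetD)
    finally show ?thesis
      using c(2,3) n cc(1) M by (simp add: m_assoc subsetD)
  qed
  then show "g \<in> {g \<in> carrier G. \<forall>n\<in>M. g \<otimes> n = n \<otimes> g}"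
    using c(2,3) cc(1) M by auto
qed

lemma two_mult_card_sq_le_card_carrier:
  assumes fin: "finite (carrier G)" and M: "subgroup M G"
    and Mab: "\<And>m n. m \<in> M \<Longrightarrow> n \<in> M \<Longrightarrow> m \<otimes> n = n \<otimes> m"
    and MZ: "M \<inter> group_center G = {\<one>}"
    and z: "z \<in> group_center G" "z \<otimes> z = \<one>" "z \<notin> M"
    and cu: "\<And>g h. g \<in> carrier G \<Longrightarrow> h \<in> carrier G \<Longrightarrow> commute_up_to G z g h"
  shows "2 * card M * card M \<le> card (carrier G)"
proof -
  let ?C = "{g \<in> carrier G. \<forall>m\<in>M. g \<otimes> m = m \<otimes> g}"
  have Mc: "\<And>m. m \<in> M \<Longrightarrow> m \<in> carrier G" and finM: "finite M"
    using subgroup.mem_carrier[OF M] fin finite_subset subgroup.subset[OF M] by blast+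
  have zc: "z \<in> carrier G" "\<And>g. g \<in> carrier G \<Longrightarrow> z \<otimes> g = g \<otimes> z"
    using z(1) unfolding group_center_def by auto
  have "z \<noteq> \<one>" using z(3) subgroup.one_closed[OF M] by blast
  then have order: "card (carrier G) = card ?C * card M"
    using card_carrier_eq_card_centralizer_mult[OF fin M z(1,2) _ cu MZ] by blast
  have sub: "{\<one>, z} <#> M \<subseteq> ?C"
    using set_mult_central_subset_centralizer[of "{\<one>, z}" M] z(1) Mc Mab
      one_closed unfolding group_center_def by auto
  have "card ({\<one>, z} <#> M) \<le> card ?C"
    using card_mono[OF _ sub] fin by simp
  then have "2 * card M \<le> card ?C"
    using card_set_mult_involution[OF M finM zc(1) z(3)] by simp
  then show ?thesis
    using order by simp
qed

end

section \<open>Slim dense near hexagons\<close>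

lemma adj_rel_relpow_sym: "(x, y) \<in> adj_rel L ^^ n \<Longrightarrow> (y, x) \<in> adj_rel L ^^ n"
proof (induction n arbitrary: y)
  case (Suc n)
  then obtain z where "(x, z) \<in> adj_rel L ^^ n" "(z, y) \<in> adj_rel L" by auto
  then have "(z, x) \<in> adj_rel L ^^ n" "(y, z) \<in> adj_rel L"
    using Suc.IH by (auto simp: adj_rel_def collinear_def)
  then show ?case by (meson relpow_Suc_I2)
qed simp

lemma gdist_sym: "gdist L x y = gdist L y x"
  unfolding gdist_def by (metis adj_rel_relpow_sym)

lemma gdist_le: "(x, y) \<in> adj_rel L ^^ n \<Longrightarrow> gdist L x y \<le> n"
  unfolding gdist_def by (rule Least_le)

lemma gdist_refl [simp]: "gdist L x x = 0"
  using gdist_le[where n=0 and x=x and y=x and L=L] by simp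

locale slim_dense_near_hexagon =
  fixes P :: "'p set" and L :: "'p set set"
  assumes dense_near_hexagon: "dense_near_hexagon P L"
begin

abbreviation d where "d \<equiv> gdist L"
abbreviation col where "col \<equiv> collinear L"

lemma near_hexagon: "near_hexagon P L"
  using dense_near_hexagon by (simp add: dense_near_hexagon_def)

lemma slim: "slim_pls P L"
  using near_hexagon by (simp add: near_hexagon_def)

lemma line_subset: "l \<in> L \<Longrightarrow> l \<subseteq> P"
  using slim by (simp add: slim_pls_def)

lemma line_card: "l \<in> L \<Longrightarrow> card l = 3"
  using slim by (simp add: slim_pls_def)

lemma connected: "x \<in> P \<Longrightarrow> y \<in> P \<Longrightarrow> \<exists>n. (x, y) \<in> adj_rel L ^^ n"
  using near_hexagon by (simp add: near_hexagon_def)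

lemma dist_le_3: "x \<in> P \<Longrightarrow> y \<in> P \<Longrightarrow> d x y \<le> 3"
  using near_hexagon by (simp add: near_hexagon_def)

lemma ex_opposite_pair: "\<exists>x\<in>P. \<exists>y\<in>P. d x y = 3"
  using near_hexagon by (simp add: near_hexagon_def)

lemma ex_nearest_point: "x \<in> P \<Longrightarrow> l \<in> L \<Longrightarrow> \<exists>y\<in>l. \<forall>z\<in>l. z \<noteq> y \<longrightarrow> d x y < d x z"
  using near_hexagon by (simp add: near_hexagon_def) (metis (no_types, lifting))

lemma ex_quad: "x \<in> P \<Longrightarrow> y \<in> P \<Longrightarrow> d x y = 2 \<Longrightarrow> \<exists>Q. quad P L Q \<and> x \<in> Q \<and> y \<in> Q"
  using dense_near_hexagon by (simp add: dense_near_hexagon_def)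

lemma collinear_in_P: "col x y \<Longrightarrow> x \<in> P \<and> y \<in> P"
  unfolding collinear_def using line_subset by blast

lemma collinear_sym: "col x y \<Longrightarrow> col y x"
  unfolding collinear_def by blast

lemma collinear_neq: "col x y \<Longrightarrow> x \<noteq> y"
  unfolding collinear_def by blast

lemma collinearI: "l \<in> L \<Longrightarrow> x \<in> l \<Longrightarrow> y \<in> l \<Longrightarrow> x \<noteq> y \<Longrightarrow> col x y"
  unfolding collinear_def by blast

lemma line_points_in_P: "{x, y, z} \<in> L \<Longrightarrow> x \<in> P \<and> y \<in> P \<and> z \<in> P"
  using line_subset by blast

lemma line_points_distinct: "{x, y, z} \<in> L \<Longrightarrow> x \<noteq> y \<and> y \<noteq> z \<and> x \<noteq> z"
  using line_card[of "{x, y, z}"] by (auto simp: card_insert_if split: if_splits)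

lemma line_third_point:
  assumes "col x y"
  obtains z where "{x, y, z} \<in> L" "z \<noteq> x" "z \<noteq> y"
proof -
  obtain l where l: "l \<in> L" "x \<in> l" "y \<in> l"
    using assms unfolding collinear_def by blast
  have "card (l - {x, y}) = 1"
    using l line_card[OF l(1)] collinear_neq[OF assms] card_Diff_subset[of "{x, y}" l]
    by (simp add: card_gt_0_iff)
  then obtain z where z: "l - {x, y} = {z}" by (rule card_1_singletonE)
  then have "l = {x, y, z}" using l by blast
  then show ?thesis using that z l by blast
qed

lemma relpow_dist: "x \<in> P \<Longrightarrow> y \<in> P \<Longrightarrow> (x, y) \<in> adj_rel L ^^ d x y"
  unfolding gdist_def using connected by (meson LeastI)

lemma dist_eq_0_iff: "x \<in> P \<Longrightarrow> y \<in> P \<Longrightarrow> d x y = 0 \<longleftrightarrow> x = y"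
  using relpow_dist[of x y] by auto

lemma dist_collinear: "col x y \<Longrightarrow> d x y = 1"
proof -
  assume xy: "col x y"
  then have "d x y \<le> 1" using gdist_le[where n=1 and x=x and y=y and L=L] by (auto simp: adj_rel_def)
  moreover have "d x y \<noteq> 0" using xy collinear_neq dist_eq_0_iff collinear_in_P by metis
  ultimately show "d x y = 1" by simp
qed

lemma dist_eq_1_iff: "x \<in> P \<Longrightarrow> y \<in> P \<Longrightarrow> d x y = 1 \<longleftrightarrow> col x y"
  using relpow_dist[of x y] dist_collinear by (auto simp: adj_rel_def)

lemma dist_triangle: "x \<in> P \<Longrightarrow> y \<in> P \<Longrightarrow> z \<in> P \<Longrightarrow> d x z \<le> d x y + d y z"
  using relpow_dist gdist_le relpow_add by (metis relcompI)

lemma dist_Suc_collinear_step: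
  assumes "x \<in> P" "y \<in> P" "d x y = Suc n"
  obtains z where "col x z" "d z y = n"
proof -
  obtain z where z: "(x, z) \<in> adj_rel L" "(z, y) \<in> adj_rel L ^^ n"
    using relpow_dist[OF assms(1,2)] unfolding assms(3) by (rule relpow_Suc_E2)
  have xz: "col x z" using z(1) unfolding adj_rel_def by simp
  have "d z y \<le> n" using gdist_le[OF z(2)] .
  moreover have "d x y \<le> d x z + d z y"
    using collinear_in_P[OF xz] assms(2) by (intro dist_triangle) auto
  ultimately show ?thesis using that xz dist_collinear[OF xz] assms(3) by simp
qed

lemma dist_collinear_le:
  assumes "col x z" "y \<in> P"
  shows "d x y \<le> d z y + 1"
  using dist_triangle[of x z y] collinear_in_P[OF assms(1)] assms dist_collinear by (simp add: add.commute)

lemma dist_to_line: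
  assumes l: "{p, q, s} \<in> L" and x: "x \<in> P"
  shows "(d x q = Suc (d x p) \<and> d x s = Suc (d x p)) \<or>
         (d x p = Suc (d x q) \<and> d x s = Suc (d x q)) \<or>
         (d x p = Suc (d x s) \<and> d x q = Suc (d x s))"
proof -
  obtain y where y: "y \<in> {p, q, s}" "\<forall>z\<in>{p, q, s}. z \<noteq> y \<longrightarrow> d x y < d x z"
    using ex_nearest_point[OF x l] by blast
  have "col p q" "col q s" "col p s"
    using collinearI[OF l] line_points_distinct[OF l] by auto
  then have "d x p \<le> d x q + 1" "d x q \<le> d x p + 1" "d x q \<le> d x s + 1" "d x s \<le> d x q + 1"
    "d x p \<le> d x s + 1" "d x s \<le> d x p + 1"
    using dist_collinear_le x collinear_sym gdist_sym by metis+
  then show ?thesis using y line_points_distinct[OF l] by auto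
qed

lemma mem_line_if_collinear_two:
  assumes "l \<in> L" "y \<in> l" "z \<in> l" "y \<noteq> z" "col x y" "col x z"
  shows "x \<in> l"
proof -
  have x: "x \<in> P" using collinear_in_P assms by blast
  obtain w where w: "w \<in> l" "\<forall>v\<in>l. v \<noteq> w \<longrightarrow> d x w < d x v"
    using ex_nearest_point[OF x assms(1)] by blast
  have "d x w < 1"
    using w assms(2-4) dist_collinear[OF assms(5)] dist_collinear[OF assms(6)] by metis
  then show ?thesis
    using dist_eq_0_iff x line_subset assms(1) w(1) by (metis less_one subsetD)
qed

lemma dist_eq_2_if_common_neighbour:
  assumes "col x c" "col c y" "x \<noteq> y" "\<not> col x y"
  shows "d x y = 2"
proof -
  have P: "x \<in> P" "y \<in> P" "c \<in> P" using collinear_in_P assms by auto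
  have "d x y \<le> d x c + d c y" using P by (intro dist_triangle) auto
  moreover have "d x c = 1" "d c y = 1" using dist_collinear assms by auto
  moreover have "d x y \<noteq> 0" "d x y \<noteq> 1" using dist_eq_0_iff dist_eq_1_iff P assms by auto
  ultimately show ?thesis by linarith
qed

lemma ex_common_neighbour:
  assumes "x \<in> P" "y \<in> P" "d x y = 2"
  obtains c where "col x c" "col c y"
proof -
  obtain c where "col x c" "d c y = 1"
    using dist_Suc_collinear_step[of x y 1] assms by auto
  then show ?thesis using that dist_eq_1_iff collinear_in_P assms(2) by blast
qed

lemma dist_eq_2_not_collinear: "x \<in> P \<Longrightarrow> y \<in> P \<Longrightarrow> d x y = 2 \<Longrightarrow> \<not> col x y \<and> x \<noteq> y"
  using dist_collinear by force

lemma collinear_on_line_if_dist_2: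
  assumes l: "{p, q, s} \<in> L" and z: "z \<in> P" "d z p = 2" "d z q \<le> 2" "d z s \<le> 2"
  shows "col z q \<or> col z s"
proof -
  have "d z q = 1 \<or> d z s = 1" using dist_to_line[OF l z(1)] z(2-4) by linarith
  then show ?thesis using dist_eq_1_iff z(1) line_points_in_P[OF l] by blast
qed

lemma quad_subset: "quad P L Q \<Longrightarrow> Q \<subseteq> P"
  by (simp add: quad_def convex_sub_def)

lemma quad_line_subset: "\<lbrakk>quad P L Q; l \<in> L; x \<in> l; y \<in> l; x \<noteq> y; x \<in> Q; y \<in> Q\<rbrakk> \<Longrightarrow> l \<subseteq> Q"
  unfolding quad_def convex_sub_def by blast

lemma quad_dist_le_2: "quad P L Q \<Longrightarrow> x \<in> Q \<Longrightarrow> y \<in> Q \<Longrightarrow> d x y \<le> 2"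
  unfolding quad_def by blast

lemma quad_ex_not_collinear: "quad P L Q \<Longrightarrow> x \<in> Q \<Longrightarrow> \<exists>y\<in>Q. y \<noteq> x \<and> \<not> col x y"
  unfolding quad_def by blast

lemma quad_common_neighbour_mem:
  assumes Q: "quad P L Q" "x \<in> Q" "y \<in> Q" and c: "col x c" "col c y" and xy: "x \<noteq> y" "\<not> col x y"
  shows "c \<in> Q"
proof -
  have "d x c + d c y = d x y"
    using dist_eq_2_if_common_neighbour[OF c xy] dist_collinear[OF c(1)] dist_collinear[OF c(2)] by simp
  then show ?thesis
    using Q collinear_in_P[OF c(1)] unfolding quad_def convex_sub_def by blast
qed

lemma quad_mem_if_collinear_two:
  assumes Q: "quad P L Q" "x \<in> Q" "y \<in> Q" "x \<noteq> y" and w: "col w x" "col w y"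
  shows "w \<in> Q"
proof (cases "col x y")
  case True
  obtain z where l: "{x, y, z} \<in> L" using line_third_point[OF True] .
  then have "w \<in> {x, y, z}" using mem_line_if_collinear_two[OF l _ _ Q(4) w] by simp
  then show ?thesis using quad_line_subset[OF Q(1) l _ _ Q(4,2,3)] by blast
next
  case False
  then show ?thesis
    using quad_common_neighbour_mem[OF Q(1-3) collinear_sym[OF w(1)] w(2) Q(4)] by blast
qed

lemma line_through_point:
  assumes "l \<in> L" "x \<in> l"
  obtains s w where "l = {x, s, w}"
proof -
  have "card (l - {x}) = 2"
    using line_card[OF assms(1)] assms(2) by (simp add: card_gt_0_iff)
  then obtain s w where "l - {x} = {s, w}" by (meson card_2_iff)
  then show ?thesis using that assms(2) by blast
qed

lemma quad_line_common_neighbour: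
  assumes Q: "quad P L Q" and l: "l \<in> L" "l \<subseteq> Q" "x \<in> l" and y: "y \<in> Q" "d x y = 2"
  obtains c where "c \<in> l" "c \<noteq> x" "col c y"
proof -
  obtain s w where lxsw: "l = {x, s, w}"
    using line_through_point[OF l(1,3)] by blast
  have "d y x = 2" using y(2) gdist_sym by metis
  moreover have "d y s \<le> 2" "d y w \<le> 2"
    using quad_dist_le_2[OF Q y(1)] l(2) lxsw by auto
  ultimately have "col y s \<or> col y w"
    using collinear_on_line_if_dist_2 l(1) lxsw quad_subset[OF Q] y(1) by blast
  then show ?thesis
    using that collinear_sym lxsw collinear_neq dist_eq_2_not_collinear quad_subset[OF Q] y l
    by (metis insertCI subsetD)
qed

lemma quad_line_through:
  assumes "quad P L Q" "x \<in> Q" "y \<in> Q" "col x y"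
  obtains z where "{x, y, z} \<in> L" "{x, y, z} \<subseteq> Q"
proof -
  obtain z where l: "{x, y, z} \<in> L" using line_third_point[OF assms(4)] .
  then show ?thesis
    using that quad_line_subset[OF assms(1) l _ _ collinear_neq[OF assms(4)] assms(2,3)] by blast
qed

lemma quad_second_common_neighbour:
  assumes Q: "quad P L Q" "x \<in> Q" "y \<in> Q" "d x y = 2"
    and z: "z \<in> Q" "col x z" "z \<noteq> a" "\<not> col a z"
  obtains c where "c \<noteq> a" "col x c" "col c y"
proof -
  obtain w where l: "{x, z, w} \<in> L" "{x, z, w} \<subseteq> Q"
    using quad_line_through[OF Q(1,2) z(1,2)] .
  obtain c where c: "c \<in> {x, z, w}" "c \<noteq> x" "col c y"
    using quad_line_common_neighbour[OF Q(1) l(1,2) _ Q(3,4)] by blast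
  have "a \<noteq> w"
    using collinearI[OF l(1), of w z] line_points_distinct[OF l(1)] collinear_sym z(4) by blast
  then have "c \<noteq> a" using z c(1) by auto
  moreover have "col x c" using collinearI[OF l(1) _ c(1)] c(2) by simp
  ultimately show ?thesis using that c(3) by blast
qed

lemma quad_ex_neighbour_not_collinear:
  assumes Q: "quad P L Q" "y \<in> Q" and l: "{a, x, u} \<in> L" "{a, x, u} \<subseteq> Q"
    and y: "col a y" "y \<notin> {a, x, u}"
    and y0: "y0 \<in> Q" "col y0 u" "\<not> col a y0" "y0 \<noteq> a" "\<not> col y y0"
  obtains p where "p \<in> Q" "col y p" "p \<noteq> a" "\<not> col a p"
proof -
  obtain p where m: "{u, y0, p} \<in> L" "{u, y0, p} \<subseteq> Q"
    using quad_line_through[OF Q(1) _ y0(1) collinear_sym[OF y0(2)]] l(2) by blast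
  have "\<not> col y u"
    using mem_line_if_collinear_two[OF l(1), of a u y] line_points_distinct[OF l(1)]
      collinear_sym[OF y(1)] y(2) by auto
  then have "d y u = 2"
    using dist_eq_2_if_common_neighbour[OF collinear_sym[OF y(1)] collinearI[OF l(1), of a u]]
      line_points_distinct[OF l(1)] y(2) by blast
  then have "col y p"
    using collinear_on_line_if_dist_2[OF m(1)] quad_subset[OF Q(1)] quad_dist_le_2[OF Q(1,2)] m(2) Q(2) y0(5)
    by auto
  moreover have "a \<notin> {u, y0, p}"
    using collinearI[OF m(1)] y0(3,4) by blast
  then have "p \<noteq> a" "\<not> col a p"
    using mem_line_if_collinear_two[OF m(1), of u p a] collinearI[OF l(1), of a u]
      line_points_distinct[OF m(1)] line_points_distinct[OF l(1)] by auto
  moreover have "p \<in> Q" using m(2) by blast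
  ultimately show ?thesis using that by blast
qed

lemma two_common_neighbours:
  assumes xy: "x \<in> P" "y \<in> P" "d x y = 2"
  obtains c1 c2 where "c1 \<noteq> c2" "col x c1" "col c1 y" "col x c2" "col c2 y"
proof -
  obtain Q where Q: "quad P L Q" "x \<in> Q" "y \<in> Q" using ex_quad xy by blast
  obtain a where a: "col x a" "col a y" using ex_common_neighbour xy by blast
  have nxy: "\<not> col x y" "x \<noteq> y" using dist_eq_2_not_collinear xy by auto
  have aQ: "a \<in> Q" using quad_common_neighbour_mem[OF Q a nxy(2,1)] .
  have yx: "d y x = 2" using xy(3) gdist_sym by metis
  obtain u where lx: "{a, x, u} \<in> L" "{a, x, u} \<subseteq> Q"
    using quad_line_through[OF Q(1) aQ Q(2) collinear_sym[OF a(1)]] .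
  obtain y0 where y0: "y0 \<in> Q" "y0 \<noteq> a" "\<not> col a y0"
    using quad_ex_not_collinear[OF Q(1) aQ] by blast
  have y0P: "y0 \<in> P" and aP: "a \<in> P" using y0(1) aQ quad_subset[OF Q(1)] by auto
  have "d y0 a \<noteq> 0" "d y0 a \<noteq> 1"
    using dist_eq_0_iff dist_eq_1_iff y0P aP y0(2,3) collinear_sym by blast+
  then have "d y0 a = 2" using quad_dist_le_2[OF Q(1) y0(1) aQ] by linarith
  then have "col y0 x \<or> col y0 u"
    using collinear_on_line_if_dist_2[OF lx(1) y0P] quad_dist_le_2[OF Q(1) y0(1)] lx(2) by simp
  then consider "col x y0" | "col y y0" | "col y0 u" "\<not> col y y0"
    using collinear_sym by blast
  then obtain c where c: "c \<noteq> a" "col x c" "col c y"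
  proof cases
    case 1
    then show ?thesis using quad_second_common_neighbour[OF Q xy(3) y0(1) _ y0(2,3)] that by blast
  next
    case 2
    then show ?thesis
      using quad_second_common_neighbour[OF Q(1,3,2) yx y0(1) _ y0(2,3)] that collinear_sym by blast
  next
    case 3
    have "y \<notin> {a, x, u}" using collinearI[OF lx(1), of x y] collinear_neq[OF a(2)] nxy by auto
    then obtain p where "p \<in> Q" "col y p" "p \<noteq> a" "\<not> col a p"
      using quad_ex_neighbour_not_collinear[OF Q(1,3) lx a(2) _ y0(1) 3(1) y0(3,2) 3(2)] by blast
    then show ?thesis
      using quad_second_common_neighbour[OF Q(1,3,2) yx] that collinear_sym by blast
  qed
  then show ?thesis using that a by blast
qed

lemma grid_collinear:
  assumes xy: "d x y = 2" and c: "col x c1" "col c1 y" "col x c2" "col c2 y" "c1 \<noteq> c2"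
    and l1: "{x, c1, u1} \<in> L" and l2: "{y, c2, v2} \<in> L"
  shows "col u1 v2 \<and> \<not> col x v2 \<and> x \<noteq> v2"
proof -
  have P: "x \<in> P" "y \<in> P" using collinear_in_P c by auto
  have nxy: "\<not> col x y" "x \<noteq> y" using dist_eq_2_not_collinear P xy by auto
  have d1: "y \<noteq> c2" "c2 \<noteq> v2" "y \<noteq> v2" "x \<noteq> c1" "c1 \<noteq> u1" "x \<noteq> u1"
    using line_points_distinct l1 l2 by auto
  have xv: "x \<noteq> v2" using nxy collinearI[OF l2, of v2 y] d1 by auto
  have nxv: "\<not> col x v2"
    using mem_line_if_collinear_two[OF l2, of c2 v2 x] c(3) d1 nxy xv collinear_neq[OF c(3)] by auto
  have "d v2 x = 2"
    using dist_eq_2_if_common_neighbour[OF collinearI[OF l2, of v2 c2] collinear_sym[OF c(3)]] d1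
      nxv collinear_sym xv by (metis insertCI)
  moreover have "c1 \<noteq> v2" "\<not> col c1 v2"
    using mem_line_if_collinear_two[OF l2, of y v2 c1] c collinear_neq nxv d1 by auto
  then have "d v2 c1 = 2"
    using dist_eq_2_if_common_neighbour[OF collinearI[OF l2, of v2 y] collinear_sym[OF c(2)]] d1
      collinear_sym by (metis insertCI)
  moreover have v2P: "v2 \<in> P" using line_points_in_P[OF l2] by blast
  ultimately have "d v2 u1 = 1"
    using dist_to_line[OF l1, of v2] by linarith
  then have "col v2 u1" using dist_eq_1_iff v2P line_points_in_P[OF l1] by blast
  then show ?thesis using collinear_sym nxv xv by blast
qed

lemma grid_ninth_point_collinear:
  assumes xy: "d x y = 2" and c: "col x c1" "col c1 y" "col x c2" "col c2 y" "c1 \<noteq> c2"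
    and l1: "{x, c1, u1} \<in> L" and l2: "{y, c2, v2} \<in> L" and l3: "{x, c2, u2} \<in> L"
    and l4: "{u1, v2, z} \<in> L"
  shows "col z u2 \<and> z \<noteq> u2"
proof -
  have P: "x \<in> P" "y \<in> P" "c2 \<in> P" "z \<in> P" using collinear_in_P c line_points_in_P[OF l4] by auto
  have nxy: "\<not> col x y" "x \<noteq> y" using dist_eq_2_not_collinear P xy by auto
  have g: "\<not> col x v2" "x \<noteq> v2" using grid_collinear[OF xy c l1 l2] by auto
  have d: "x \<noteq> c1" "c1 \<noteq> u1" "x \<noteq> u1" "y \<noteq> c2" "c2 \<noteq> v2" "y \<noteq> v2"
    using line_points_distinct l1 l2 by auto
  have "c2 \<notin> {x, c1, u1}"
  proof
    assume "c2 \<in> {x, c1, u1}"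
    then have "c2 = u1" using c(5) collinear_neq[OF c(3)] by blast
    then have "y \<in> {x, c1, u1}"
      using mem_line_if_collinear_two[OF l1, of c1 u1 y] c(2,4,5) collinear_sym by blast
    then show False using nxy collinear_neq[OF c(2)] collinear_neq[OF c(4)] \<open>c2 = u1\<close> by blast
  qed
  then have "\<not> col c2 u1" "c2 \<noteq> u1"
    using mem_line_if_collinear_two[OF l1, of x u1 c2] d c(3) collinear_sym by auto
  then have "d c2 u1 = 2"
    using dist_eq_2_if_common_neighbour[OF collinear_sym[OF c(3)] collinearI[OF l1, of x u1]] d by blast
  moreover have "d c2 v2 = 1" using dist_collinear collinearI[OF l2, of c2 v2] d by blast
  ultimately have "d c2 z = 2" using dist_to_line[OF l4 P(3)] by linarith
  have "d x v2 = 2"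
    using dist_eq_2_if_common_neighbour[OF c(3) collinearI[OF l2, of c2 v2]] d g by blast
  moreover have "d x u1 = 1" using dist_collinear collinearI[OF l1, of x u1] d by blast
  ultimately have "d x z = 2" using dist_to_line[OF l4 P(1)] by linarith
  then have "d z x = 2" "d z c2 = 2" using \<open>d c2 z = 2\<close> gdist_sym by metis+
  then have "d z u2 = 1" using dist_to_line[OF l3 P(4)] by linarith
  then have "col z u2" using dist_eq_1_iff P(4) line_points_in_P[OF l3] by blast
  moreover have "d x u2 = 1"
    using dist_collinear collinearI[OF l3, of x u2] line_points_distinct[OF l3] by blast
  ultimately show ?thesis using \<open>d x z = 2\<close> by auto
qed

lemma grid_ninth_point:
  assumes xy: "d x y = 2" and c: "col x c1" "col c1 y" "col x c2" "col c2 y" "c1 \<noteq> c2"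
    and l1: "{x, c1, u1} \<in> L" and l2: "{y, c2, v2} \<in> L" and l3: "{x, c2, u2} \<in> L"
    and l5: "{y, c1, v1} \<in> L" and l4: "{u1, v2, z} \<in> L"
  shows "{u2, v1, z} \<in> L"
proof -
  have a1: "col z u2" "z \<noteq> u2" using grid_ninth_point_collinear[OF xy c l1 l2 l3 l4] by auto
  have "d y x = 2" using xy gdist_sym by metis
  moreover have "{v2, u1, z} \<in> L" using l4 by (simp add: insert_commute)
  ultimately have a2: "col z v1" "z \<noteq> v1"
    using grid_ninth_point_collinear[of y x c2 c1 v2 u1 v1 z] c collinear_sym l1 l2 l5 by auto
  have "col u2 v1" using grid_collinear[OF xy c(3,4,1,2) c(5)[symmetric] l3 l5] by auto
  then obtain w where w: "{u2, v1, w} \<in> L" by (rule line_third_point)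
  have "z \<in> {u2, v1, w}"
    using mem_line_if_collinear_two[OF w _ _ collinear_neq[OF \<open>col u2 v1\<close>]] a1 a2 by auto
  then show ?thesis using w a1 a2 by auto
qed

lemma connected_induct:
  assumes "x0 \<in> P" "\<Phi> x0" "\<And>x y. col x y \<Longrightarrow> \<Phi> x \<Longrightarrow> \<Phi> y" "x \<in> P"
  shows "\<Phi> x"
proof -
  obtain n where "(x0, x) \<in> adj_rel L ^^ n" using connected assms(1,4) by blast
  then show ?thesis
  proof (induction n arbitrary: x)
    case (Suc n)
    then obtain y where "(x0, y) \<in> adj_rel L ^^ n" "(y, x) \<in> adj_rel L" by auto
    then show ?case using Suc.IH assms(3) unfolding adj_rel_def by blast
  qed (use assms(2) in simp)
qed

lemma dist_ge_2_if_collinear_opposite: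
  assumes "x \<in> P" "d x y = 3" "col y z"
  shows "2 \<le> d x z"
proof -
  have "d y x \<le> d z x + 1" using dist_collinear_le[OF assms(3,1)] .
  then show ?thesis using assms(2) gdist_sym[of L x y] gdist_sym[of L x z] by simp
qed

lemma quad_neighbour_mem_if_no_opposite:
  assumes no_opp: "\<And>z. z \<in> P \<Longrightarrow> d p z \<le> 2"
    and Q: "quad P L Q" "p \<in> Q" "q \<in> Q" and pq: "d p q = 2" and e: "col q e"
  shows "e \<in> Q"
proof -
  obtain e' where l: "{q, e, e'} \<in> L" using line_third_point[OF e] .
  have p: "p \<in> P" using Q quad_subset by blast
  have "d p e \<le> 2" "d p e' \<le> 2" using no_opp line_points_in_P[OF l] by auto
  then obtain f where f: "f \<in> {e, e'}" "col p f"
    using collinear_on_line_if_dist_2[OF l p pq] by blast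
  have "f \<noteq> q" using f(1) line_points_distinct[OF l] by auto
  moreover have "col f q" using collinearI[OF l, of f q] f(1) calculation by auto
  moreover have "p \<noteq> q" "\<not> col p q" using dist_eq_2_not_collinear p Q(3) quad_subset[OF Q(1)] pq by blast+
  ultimately have "f \<in> Q" using quad_common_neighbour_mem[OF Q f(2)] by blast
  then have "{q, e, e'} \<subseteq> Q" using quad_line_subset[OF Q(1) l _ _ \<open>f \<noteq> q\<close>] f Q(3) by auto
  then show ?thesis by blast
qed

(* If p had no opposite point, every neighbour of q would lie in the quad Q through p and q, yet
   a common neighbour w <> p of c and p' lies outside Q and is collinear with two points of Q. *)
lemma ex_opposite_if_collinear:
  assumes pp: "col p p'" and q: "q \<in> P" "d p' q = 3"
  shows "\<exists>q\<in>P. d p q = 3"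
proof (rule ccontr)
  assume "\<not> (\<exists>q\<in>P. d p q = 3)"
  then have no_opp: "\<And>z. z \<in> P \<Longrightarrow> d p z \<le> 2"
    using dist_le_3 collinear_in_P[OF pp] by fastforce
  have p: "p \<in> P" "p' \<in> P" using collinear_in_P[OF pp] by auto
  have "d q p' = 3" using q(2) gdist_sym by metis
  then have dpq: "d p q = 2"
    using dist_ge_2_if_collinear_opposite[OF q(1) _ collinear_sym[OF pp]] no_opp[OF q(1)] gdist_sym
    by (metis le_antisym)
  obtain Q where Q: "quad P L Q" "p \<in> Q" "q \<in> Q" using ex_quad p(1) q(1) dpq by blast
  note nbQ = quad_neighbour_mem_if_no_opposite[OF no_opp Q dpq]
  obtain c where c: "col p c" "col c q" using ex_common_neighbour p(1) q(1) dpq by blast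
  have cQ: "c \<in> Q" using quad_common_neighbour_mem[OF Q c] dist_eq_2_not_collinear p(1) q(1) dpq by blast
  have p'Q: "p' \<notin> Q" using quad_dist_le_2[OF Q(1) _ Q(3), of p'] q(2) by auto
  have "c \<noteq> p'" "\<not> col c p'"
    using dist_collinear c(2) q p(2) dist_triangle[of p' c q] collinear_in_P[OF c(2)] dist_collinear
      collinear_sym by force+
  then have "d c p' = 2"
    using dist_eq_2_if_common_neighbour[OF collinear_sym[OF c(1)] pp] by blast
  then obtain w where w: "w \<noteq> p" "col c w" "col w p'"
    using two_common_neighbours[of c p'] collinear_in_P[OF c(2)] p(2) by metis
  have wQ: "w \<notin> Q"
    using quad_mem_if_collinear_two[OF Q(1,2) _ w(1)[symmetric] collinear_sym[OF pp] collinear_sym[OF w(3)]] p'Q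
    by blast
  have "w \<noteq> q" "\<not> col w q" using wQ Q(3) nbQ collinear_sym by blast+
  then have "d w q = 2"
    using dist_eq_2_if_common_neighbour[OF collinear_sym[OF w(2)] c(2)] by blast
  then obtain e where e: "e \<noteq> c" "col w e" "col e q"
    using two_common_neighbours[of w q] collinear_in_P[OF w(2)] q(1) by metis
  have "e \<in> Q" using nbQ collinear_sym[OF e(3)] by blast
  then have "w \<in> Q"
    using quad_mem_if_collinear_two[OF Q(1) cQ _ e(1)[symmetric] collinear_sym[OF w(2)] e(2)] by blast
  then show False using wQ by blast
qed

lemma ex_opposite:
  assumes "x \<in> P"
  shows "\<exists>y\<in>P. d x y = 3"
proof -
  obtain x0 y0 where x0: "x0 \<in> P" "y0 \<in> P" "d x0 y0 = 3" using ex_opposite_pair by blast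
  show ?thesis
  proof (rule connected_induct[OF x0(1) _ _ assms])
    show "\<exists>y\<in>P. d x0 y = 3" using x0 by blast
    show "\<And>u v. col u v \<Longrightarrow> \<exists>y\<in>P. d u y = 3 \<Longrightarrow> \<exists>y\<in>P. d v y = 3"
      using ex_opposite_if_collinear collinear_sym by blast
  qed
qed

lemma opposite_path_dist_2:
  assumes x: "x \<in> P" "d x y = 3" "d x z = 3" and yz: "y \<in> P" "z \<in> P" "d y z = 2"
  shows "(\<lambda>u v. col u v \<and> d x u = 3 \<and> d x v = 3)\<^sup>*\<^sup>* y z"
proof -
  let ?E = "\<lambda>u v. col u v \<and> d x u = 3 \<and> d x v = 3"
  obtain c1 c2 where c: "col y c1" "col c1 z" "col y c2" "col c2 z" "c1 \<noteq> c2"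
    using two_common_neighbours[OF yz] by metis
  have dc: "d x c1 \<in> {2, 3}" "d x c2 \<in> {2, 3}"
    using dist_ge_2_if_collinear_opposite[OF x(1,2)] dist_le_3[OF x(1)] c collinear_in_P by fastforce+
  show ?thesis
  proof (cases "d x c1 = 3 \<or> d x c2 = 3")
    case True
    then obtain c where "?E y c" "?E c z" using c x by blast
    then show ?thesis by (rule rtranclp.rtrancl_into_rtrancl[OF r_into_rtranclp])
  next
    case False
    then have d2: "d x c1 = 2" "d x c2 = 2" using dc by auto
    obtain u1 where l1: "{y, c1, u1} \<in> L" using line_third_point[OF c(1)] .
    obtain v2 where l2: "{z, c2, v2} \<in> L" using line_third_point[OF collinear_sym[OF c(4)]] .
    have "col u1 v2" using grid_collinear[OF yz(3) c l1 l2] by blast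
    moreover have "d x u1 = 3" using dist_to_line[OF l1 x(1)] x(2) d2 by linarith
    moreover have "d x v2 = 3" using dist_to_line[OF l2 x(1)] x(3) d2 by linarith
    moreover have "col y u1" "col v2 z"
      using collinearI[OF l1] collinearI[OF l2] line_points_distinct[OF l1] line_points_distinct[OF l2] by auto
    ultimately have e: "?E y u1" "?E u1 v2" "?E v2 z" using x by auto
    have "?E\<^sup>*\<^sup>* y v2" using e(1,2) by (rule rtranclp.rtrancl_into_rtrancl[OF r_into_rtranclp])
    then show ?thesis using e(3) by (rule rtranclp.rtrancl_into_rtrancl)
  qed
qed

lemma opposite_common_neighbour:
  assumes x: "x \<in> P" "d x y = 3" and u: "u \<in> P" "y \<in> P" "d x u = 2" "d u y = 2"
  obtains c where "col u c" "col c y" "d x c = 3"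
proof -
  obtain c1 c2 where c: "col u c1" "col c1 y" "col u c2" "col c2 y" "c1 \<noteq> c2"
    using two_common_neighbours[OF u(1,2,4)] by metis
  have "d x c1 \<le> 3" "d x c2 \<le> 3" using dist_le_3[OF x(1)] collinear_in_P c by blast+
  moreover have "d x c1 \<ge> 2" "d x c2 \<ge> 2"
    using dist_ge_2_if_collinear_opposite[OF x] collinear_sym c(2,4) by blast+
  moreover have "\<not> (d x c1 = 2 \<and> d x c2 = 2)"
  proof
    assume d2: "d x c1 = 2 \<and> d x c2 = 2"
    obtain c1' where l1: "{u, c1, c1'} \<in> L" using line_third_point[OF c(1)] .
    obtain v2 where l2: "{y, c2, v2} \<in> L" using line_third_point[OF collinear_sym[OF c(4)]] .
    have g: "col c1' v2" using grid_collinear[OF u(4) c l1 l2] by blast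
    have "d x c1' = 1" using dist_to_line[OF l1 x(1)] u(3) d2 by linarith
    moreover have "d x v2 = 3" using dist_to_line[OF l2 x(1)] x(2) d2 by linarith
    moreover have "d x v2 \<le> d x c1' + d c1' v2" using x(1) collinear_in_P[OF g] by (intro dist_triangle) auto
    ultimately show False using dist_collinear[OF g] by linarith
  qed
  ultimately show ?thesis using that c by fastforce
qed

lemma opposite_path_dist_3:
  assumes x: "x \<in> P" "d x y = 3" "d x z = 3" and yz: "y \<in> P" "z \<in> P" "d y z = 3"
  shows "(\<lambda>u v. col u v \<and> d x u = 3 \<and> d x v = 3)\<^sup>*\<^sup>* y z"
proof -
  let ?E = "\<lambda>u v. col u v \<and> d x u = 3 \<and> d x v = 3"
  have "d z y = 3" using yz(3) gdist_sym by metis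
  then obtain u where u: "col z u" "d u y = 2"
    using dist_Suc_collinear_step[OF yz(2,1), of 2] by auto
  have uP: "u \<in> P" using collinear_in_P u by blast
  have "d x u \<in> {2, 3}"
    using dist_ge_2_if_collinear_opposite[OF x(1,3) u(1)] dist_le_3[OF x(1) uP] by auto
  then consider "d x u = 3" | "d x u = 2" by blast
  then show ?thesis
  proof cases
    case 1
    have "?E\<^sup>*\<^sup>* y u" using opposite_path_dist_2[OF x(1,2) 1 yz(1) uP] u(2) gdist_sym by metis
    moreover have "?E u z" using u(1) collinear_sym 1 x(3) by blast
    ultimately show ?thesis by (rule rtranclp.rtrancl_into_rtrancl)
  next
    case 2
    obtain c where c: "col u c" "col c y" "d x c = 3"
      using opposite_common_neighbour[OF x(1,2) uP yz(1) 2 u(2)] .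
    have cP: "c \<in> P" using collinear_in_P c(1) by blast
    have "d c z \<le> d c u + d u z" "d y z \<le> d y c + d c z"
      using dist_triangle cP uP yz by blast+
    moreover have "d c u = 1" "d u z = 1" "d y c = 1"
      using dist_collinear c(1,2) u(1) collinear_sym by auto
    ultimately have "d c z = 2" using yz(3) by linarith
    then have "?E\<^sup>*\<^sup>* c z" using opposite_path_dist_2[OF x(1) c(3) x(3) cP yz(2)] by blast
    moreover have "?E y c" using c(2,3) x(2) collinear_sym by blast
    ultimately show ?thesis by (rule converse_rtranclp_into_rtranclp[rotated])
  qed
qed

lemma opposite_path:
  assumes x: "x \<in> P" "d x y = 3" "d x z = 3" and yz: "y \<in> P" "z \<in> P"
  shows "(\<lambda>u v. col u v \<and> d x u = 3 \<and> d x v = 3)\<^sup>*\<^sup>* y z"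
proof -
  consider "d y z = 0" | "d y z = 1" | "d y z = 2" | "d y z = 3" using dist_le_3[OF yz] by linarith
  then show ?thesis
  proof cases
    case 1
    then show ?thesis using dist_eq_0_iff yz by simp
  next
    case 2
    then show ?thesis using dist_eq_1_iff yz x by (simp add: r_into_rtranclp)
  next
    case 3
    then show ?thesis using opposite_path_dist_2 x yz by blast
  next
    case 4
    then show ?thesis using opposite_path_dist_3 x yz by blast
  qed
qed

lemma opposite_on_line:
  assumes l: "{p, p', p''} \<in> L" and q: "q \<in> P" "d q p = 3"
  shows "d q p' = 3 \<or> d q p'' = 3"
  using dist_to_line[OF l q(1)] q dist_le_3 line_points_in_P[OF l] by fastforce

end

section \<open>Representations\<close>

locale near_hexagon_representation = slim_dense_near_hexagon P L
  for P :: "'p set" and L :: "'p set set" +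
  fixes R :: "('g, 'm) monoid_scheme" and r :: "'p \<Rightarrow> 'g"
  assumes representation: "representation P L R r"
begin

lemma group: "group R"
  using representation by (simp add: representation_def)

sublocale R: group R by (rule group)

lemma r_carrier: "x \<in> P \<Longrightarrow> r x \<in> carrier R"
  using representation unfolding representation_def by blast

lemma r_neq_one: "x \<in> P \<Longrightarrow> r x \<noteq> \<one>\<^bsub>R\<^esub>"
  using representation unfolding representation_def by blast

lemma r_involution: "x \<in> P \<Longrightarrow> r x \<otimes>\<^bsub>R\<^esub> r x = \<one>\<^bsub>R\<^esub>"
  using representation unfolding representation_def by blast

lemma carrier_eq_generate: "carrier R = generate R (r ` P)"
  using representation by (simp add: representation_def)

lemma line_product:
  assumes l: "{x, y, z} \<in> L"
  shows "r x \<otimes>\<^bsub>R\<^esub> r y = r z"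
proof -
  have P: "x \<in> P" "y \<in> P" "z \<in> P" using line_points_in_P[OF l] by auto
  have "klein_four R {\<one>\<^bsub>R\<^esub>, r x, r y, r z}" using representation l unfolding representation_def by blast
  then have K: "subgroup {\<one>\<^bsub>R\<^esub>, r x, r y, r z} R" and "card {\<one>\<^bsub>R\<^esub>, r x, r y, r z} = 4"
    by (auto simp: klein_four_def)
  then have "distinct [\<one>\<^bsub>R\<^esub>, r x, r y, r z]" by (intro card_distinct) simp
  moreover have "r x \<otimes>\<^bsub>R\<^esub> r y \<in> {\<one>\<^bsub>R\<^esub>, r x, r y, r z}"
    using subgroup.m_closed[OF K] by blast
  moreover have "r y = r x" if "r x \<otimes>\<^bsub>R\<^esub> r y = \<one>\<^bsub>R\<^esub>"
  proof -
    have "r x \<otimes>\<^bsub>R\<^esub> r y = r x \<otimes>\<^bsub>R\<^esub> r x" using that r_involution P by simp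
    then show ?thesis using r_carrier P by simp
  qed
  ultimately show ?thesis
    using r_carrier P r_neq_one by auto
qed

lemma collinear_commute:
  assumes "col x y"
  shows "r x \<otimes>\<^bsub>R\<^esub> r y = r y \<otimes>\<^bsub>R\<^esub> r x"
proof -
  obtain z where "{x, y, z} \<in> L" using line_third_point[OF assms] .
  moreover have "{y, x, z} = {x, y, z}" by blast
  ultimately show ?thesis using line_product by metis
qed

lemma dist_2_commute:
  assumes xy: "x \<in> P" "y \<in> P" "d x y = 2"
  shows "r x \<otimes>\<^bsub>R\<^esub> r y = r y \<otimes>\<^bsub>R\<^esub> r x"
proof -
  obtain c1 c2 where c: "col x c1" "col c1 y" "col x c2" "col c2 y" "c1 \<noteq> c2"
    using two_common_neighbours[OF xy] by metis
  obtain u1 where l1: "{x, c1, u1} \<in> L" using line_third_point[OF c(1)] .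
  obtain u2 where l3: "{x, c2, u2} \<in> L" using line_third_point[OF c(3)] .
  obtain v1 where l5: "{y, c1, v1} \<in> L" using line_third_point[OF collinear_sym[OF c(2)]] .
  obtain v2 where l2: "{y, c2, v2} \<in> L" using line_third_point[OF collinear_sym[OF c(4)]] .
  obtain z where l4: "{u1, v2, z} \<in> L"
    using grid_collinear[OF xy(3) c l1 l2] line_third_point by metis
  have l6: "{u2, v1, z} \<in> L" using grid_ninth_point[OF xy(3) c l1 l2 l3 l5 l4] .
  have "r u1 \<otimes>\<^bsub>R\<^esub> r v2 = r u2 \<otimes>\<^bsub>R\<^esub> r v1"
    using line_product[OF l4] line_product[OF l6] by simp
  moreover have "r u2 \<otimes>\<^bsub>R\<^esub> r v1 = r v1 \<otimes>\<^bsub>R\<^esub> r u2"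
    using collinear_commute collinearI[OF l6] line_points_distinct[OF l6] by blast
  ultimately show ?thesis
    using R.commute_if_grid_relations[of "r x" "r c1" "r c2" "r y"] r_carrier xy collinear_in_P c
      collinear_commute collinear_sym line_product[OF l1] line_product[OF l2] line_product[OF l3]
      line_product[OF l5]
    by metis
qed

lemma dist_le_2_commute:
  assumes "x \<in> P" "y \<in> P" "d x y \<le> 2"
  shows "r x \<otimes>\<^bsub>R\<^esub> r y = r y \<otimes>\<^bsub>R\<^esub> r x"
proof -
  consider "d x y = 0" | "d x y = 1" | "d x y = 2" using assms(3) by linarith
  then show ?thesis
    using dist_eq_0_iff dist_eq_1_iff collinear_commute dist_2_commute assms by cases auto
qed

definition commutator :: "'p \<Rightarrow> 'p \<Rightarrow> 'g" where
  "commutator x y = r x \<otimes>\<^bsub>R\<^esub> r y \<otimes>\<^bsub>R\<^esub> r x \<otimes>\<^bsub>R\<^esub> r y"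

lemma commutator_line_step:
  assumes l: "{y, z, w} \<in> L" and x: "x \<in> P" and xw: "r x \<otimes>\<^bsub>R\<^esub> r w = r w \<otimes>\<^bsub>R\<^esub> r x"
  shows "commutator x z = commutator x y"
proof -
  have P: "y \<in> P" "w \<in> P" using line_points_in_P[OF l] by auto
  have "{y, w, z} = {y, z, w}" by blast
  then have "r z = r y \<otimes>\<^bsub>R\<^esub> r w" using line_product l by metis
  moreover have "r y \<otimes>\<^bsub>R\<^esub> r w = r w \<otimes>\<^bsub>R\<^esub> r y"
    using collinear_commute collinearI[OF l] line_points_distinct[OF l] by blast
  ultimately show ?thesis
    unfolding commutator_def
    using R.commutator_mult_commuting_involution[OF r_carrier[OF x] r_carrier[OF P(1)] r_carrier[OF P(2)]
        r_involution[OF P(2)] xw] by simp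
qed

lemma commutator_opposite_collinear:
  assumes x: "x \<in> P" and xy: "d x y = 3" and xz: "d x z = 3" and yz: "col y z"
  shows "commutator x z = commutator x y"
proof -
  obtain w where l: "{y, z, w} \<in> L" using line_third_point[OF yz] .
  have "d x w = 2" using dist_to_line[OF l x] xy xz by linarith
  then have "r x \<otimes>\<^bsub>R\<^esub> r w = r w \<otimes>\<^bsub>R\<^esub> r x"
    using dist_le_2_commute x line_points_in_P[OF l] by auto
  then show ?thesis using commutator_line_step[OF l x] by blast
qed

lemma commutator_opposite_eq:
  assumes x: "x \<in> P" and y: "y \<in> P" "d x y = 3" and z: "z \<in> P" "d x z = 3"
  shows "commutator x z = commutator x y"
  using opposite_path[OF x y(2) z(2) y(1) z(1)]
proof (induction rule: rtranclp_induct)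
  case (step u v)
  then show ?case using commutator_opposite_collinear[OF x, of u v] by simp
qed simp

lemma inv_commutator: "p \<in> P \<Longrightarrow> q \<in> P \<Longrightarrow> inv\<^bsub>R\<^esub> (commutator q p) = commutator p q"
  unfolding commutator_def using R.inv_involutions_commutator r_carrier r_involution by blast

lemma commutator_common_opposite:
  assumes "p \<in> P" "p' \<in> P" "q \<in> P" "d p q = 3" "d p' q = 3"
  shows "commutator p q = commutator p' q"
proof -
  have "d q p = 3" "d q p' = 3" using assms(4,5) gdist_sym by metis+
  then have "commutator q p = commutator q p'" using commutator_opposite_eq assms(1-3) by metis
  then show ?thesis using inv_commutator assms(1-3) by metis
qed

(* Each of q, q' is opposite two of the three points of the line through p and p', so some
   point s of that line is opposite both. *)
lemma commutator_collinear_eq: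
  assumes pp': "col p p'" and q: "q \<in> P" "d p q = 3" and q': "q' \<in> P" "d p' q' = 3"
  shows "commutator p q = commutator p' q'"
proof -
  obtain p'' where l: "{p, p', p''} \<in> L" using line_third_point[OF pp'] .
  have P: "p \<in> P" "p' \<in> P" "p'' \<in> P" using line_points_in_P[OF l] by auto
  have "d q p = 3" "d q' p' = 3" using q(2) q'(2) gdist_sym by metis+
  then have "d q p' = 3 \<or> d q p'' = 3" "d q' p = 3 \<or> d q' p'' = 3"
    using opposite_on_line[OF l q(1)] opposite_on_line[of p' p p'' q'] l q'(1) by (auto simp: insert_commute)
  then obtain s where s: "s \<in> P" "d s q = 3" "d s q' = 3" "d p q = 3" "d p' q' = 3"
    using P q(2) q'(2) gdist_sym by metis
  have "commutator p q = commutator s q" using commutator_common_opposite P(1) s q(1) by blast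
  also have "\<dots> = commutator s q'" using commutator_opposite_eq s q(1) q'(1) by metis
  also have "\<dots> = commutator p' q'" using commutator_common_opposite P(2) s q'(1) by metis
  finally show ?thesis .
qed

lemma commutator_opposite_const:
  assumes "p \<in> P" "q \<in> P" "d p q = 3" "p' \<in> P" "q' \<in> P" "d p' q' = 3"
  shows "commutator p' q' = commutator p q"
proof -
  have "\<forall>v\<in>P. d p' v = 3 \<longrightarrow> commutator p' v = commutator p q"
  proof (rule connected_induct[OF assms(1) _ _ assms(4)])
    show "\<forall>v\<in>P. d p v = 3 \<longrightarrow> commutator p v = commutator p q"
      using commutator_opposite_eq assms(1-3) by blast
    fix u u' assume uu': "col u u'" and IH: "\<forall>v\<in>P. d u v = 3 \<longrightarrow> commutator u v = commutator p q"
    obtain v where "v \<in> P" "d u v = 3" using ex_opposite collinear_in_P[OF uu'] by blast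
    then show "\<forall>v'\<in>P. d u' v' = 3 \<longrightarrow> commutator u' v' = commutator p q"
      using commutator_collinear_eq[OF uu'] IH by metis
  qed
  then show ?thesis using assms(5,6) by blast
qed

lemma r_image_subset: "r ` P \<subseteq> carrier R"
  using r_carrier by blast

lemma commutator_carrier: "p \<in> P \<Longrightarrow> q \<in> P \<Longrightarrow> commutator p q \<in> carrier R"
  unfolding commutator_def using r_carrier by simp

lemma commutator_central:
  assumes pq: "p \<in> P" "q \<in> P" "d p q = 3"
  shows "commutator p q \<in> group_center R"
proof -
  have "r u \<otimes>\<^bsub>R\<^esub> commutator p q = commutator p q \<otimes>\<^bsub>R\<^esub> r u" if u: "u \<in> P" for u
  proof -
    obtain v where v: "v \<in> P" "d u v = 3" using ex_opposite[OF u] by blast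
    then have "d v u = 3" using gdist_sym by metis
    then have "commutator u v = commutator p q" "commutator v u = commutator p q"
      using commutator_opposite_const pq u v by blast+
    then show ?thesis
      using R.involution_commute_commutator[OF r_carrier[OF u] r_carrier[OF v(1)] r_involution[OF u]]
      unfolding commutator_def by simp
  qed
  then have "\<And>s. s \<in> r ` P \<Longrightarrow> commutator p q \<otimes>\<^bsub>R\<^esub> s = s \<otimes>\<^bsub>R\<^esub> commutator p q"
    by (metis imageE)
  then have "commutator p q \<otimes>\<^bsub>R\<^esub> g = g \<otimes>\<^bsub>R\<^esub> commutator p q" if "g \<in> carrier R" for g
    using R.commute_generate[OF commutator_carrier[OF pq(1,2)] r_image_subset _
        that[unfolded carrier_eq_generate]] by blast
  then show ?thesis
    unfolding group_center_def using commutator_carrier[OF pq(1,2)] by blast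
qed

lemma commutator_involution:
  assumes pq: "p \<in> P" "q \<in> P" "d p q = 3"
  shows "commutator p q \<otimes>\<^bsub>R\<^esub> commutator p q = \<one>\<^bsub>R\<^esub>"
proof -
  have "d q p = 3" using pq(3) gdist_sym by metis
  then have "commutator q p = commutator p q" using commutator_opposite_const pq by blast
  then have "inv\<^bsub>R\<^esub> (commutator p q) = commutator p q" using inv_commutator pq(1,2) by metis
  then show ?thesis using R.r_inv commutator_carrier[OF pq(1,2)] by metis
qed

lemma commute_up_to_commutator:
  assumes pq: "p \<in> P" "q \<in> P" "d p q = 3" and gh: "g \<in> carrier R" "h \<in> carrier R"
  shows "commute_up_to R (commutator p q) g h"
proof -
  have "commute_up_to R (commutator p q) (r x) (r y)" if xy: "x \<in> P" "y \<in> P" for x y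
  proof (cases "d x y \<le> 2")
    case True
    then have "r x \<otimes>\<^bsub>R\<^esub> r y = \<one>\<^bsub>R\<^esub> \<otimes>\<^bsub>R\<^esub> (r y \<otimes>\<^bsub>R\<^esub> r x)"
      using dist_le_2_commute xy r_carrier by simp
    then show ?thesis unfolding commute_up_to_def by blast
  next
    case False
    then have "d x y = 3" using dist_le_3 xy by fastforce
    then have "r x \<otimes>\<^bsub>R\<^esub> r y = commutator p q \<otimes>\<^bsub>R\<^esub> (r y \<otimes>\<^bsub>R\<^esub> r x)"
      using R.involutions_mult_eq_commutator_mult r_carrier r_involution xy commutator_opposite_const pq
      unfolding commutator_def by metis
    then show ?thesis unfolding commute_up_to_def by blast
  qed
  then have "\<And>s t. s \<in> r ` P \<Longrightarrow> t \<in> r ` P \<Longrightarrow> commute_up_to R (commutator p q) s t"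
    by blast
  moreover have "\<And>s. s \<in> r ` P \<Longrightarrow> s \<otimes>\<^bsub>R\<^esub> s = \<one>\<^bsub>R\<^esub>"
    using r_involution by blast
  ultimately show ?thesis
    using R.commute_up_to_generate[OF commutator_central[OF pq] commutator_involution[OF pq]
        r_image_subset _ _ gh[unfolded carrier_eq_generate]] by blast
qed

lemma comm_group_if_commutator_eq_one:
  assumes pq: "p \<in> P" "q \<in> P" "d p q = 3" and one: "commutator p q = \<one>\<^bsub>R\<^esub>"
  shows "comm_group R"
proof -
  have "r x \<otimes>\<^bsub>R\<^esub> r y = r y \<otimes>\<^bsub>R\<^esub> r x" if xy: "x \<in> P" "y \<in> P" for x y
  proof (cases "d x y \<le> 2")
    case True
    then show ?thesis using dist_le_2_commute xy by blast
  next
    case False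
    then have "d x y = 3" using dist_le_3 xy by fastforce
    then have "commutator x y = \<one>\<^bsub>R\<^esub>" using commutator_opposite_const pq xy one by metis
    then show ?thesis
      using R.involutions_commute_iff r_carrier r_involution xy unfolding commutator_def by blast
  qed
  then have "\<And>s t. s \<in> r ` P \<Longrightarrow> t \<in> r ` P \<Longrightarrow> s \<otimes>\<^bsub>R\<^esub> t = t \<otimes>\<^bsub>R\<^esub> s"
    by blast
  then show ?thesis
    using R.generate_commute[OF r_image_subset] unfolding carrier_eq_generate[symmetric]
    by (intro R.group_comm_groupI) blast
qed

lemma common_neighbour_commute:
  assumes "col a x" "col a y"
  shows "r x \<otimes>\<^bsub>R\<^esub> r y = r y \<otimes>\<^bsub>R\<^esub> r x"
proof -
  have "d x y \<le> d x a + d a y"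
    using dist_triangle collinear_in_P assms by blast
  then have "d x y \<le> 2"
    using dist_collinear collinear_sym assms by fastforce
  then show ?thesis using dist_le_2_commute collinear_in_P assms by blast
qed

lemma opposite_not_commute:
  assumes "\<not> comm_group R" "p \<in> P" "q \<in> P" "d p q = 3"
  shows "r p \<otimes>\<^bsub>R\<^esub> r q \<noteq> r q \<otimes>\<^bsub>R\<^esub> r p"
  using comm_group_if_commutator_eq_one[OF assms(2-4)] assms(1)
    R.involutions_commute_iff r_carrier r_involution assms(2,3)
  unfolding commutator_def by blast

lemma abelian_subgroup_card_bound:
  assumes "\<not> comm_group R" "finite (carrier R)" "subgroup M R"
    and "\<And>m n. m \<in> M \<Longrightarrow> n \<in> M \<Longrightarrow> m \<otimes>\<^bsub>R\<^esub> n = n \<otimes>\<^bsub>R\<^esub> m"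
    and "M \<inter> group_center R = {\<one>\<^bsub>R\<^esub>}"
  shows "2 * card M * card M \<le> card (carrier R)"
proof -
  obtain p q where pq: "p \<in> P" "q \<in> P" "d p q = 3" using ex_opposite_pair by blast
  have "commutator p q \<noteq> \<one>\<^bsub>R\<^esub>" using comm_group_if_commutator_eq_one[OF pq] assms(1) by blast
  then have "commutator p q \<notin> M" using assms(5) commutator_central[OF pq] by blast
  then show ?thesis
    using R.two_mult_card_sq_le_card_carrier[OF assms(2-5) commutator_central[OF pq] commutator_involution[OF pq]]
      commute_up_to_commutator[OF pq] by blast
qed

end

theorem proposition5p1:
  fixes P :: "'p set" and L :: "'p set set"
    and R :: "('g, 'm) monoid_scheme" and r :: "'p \<Rightarrow> 'g"
    and a b :: 'p and A X :: "'p set"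
  assumes "dense_near_hexagon P L"
    and "card P \<in> {759, 729, 891, 567, 405}"
    and "representation P L R r"
    and "\<not> comm_group R"
    and "a \<in> P" and "b \<in> P" and "gdist L a b = 3"
    and "A = {x. \<exists>l\<in>L. a \<in> l \<and> x \<in> l \<and> gdist L b x = 2}"
    and "X \<subseteq> A"
    and "generate R (r ` X) \<inter> group_center R = {\<one>\<^bsub>R\<^esub>}"
    and "F2_independent R (r ` X)" and "card (r ` X) = card X"
  shows "card (set_mult R {\<one>\<^bsub>R\<^esub>, r b} (generate R (r ` X))) = 2 ^ (card X + 1) \<and>
         (set_mult R {\<one>\<^bsub>R\<^esub>, r b} (generate R (r ` X))) \<inter> group_center R = {\<one>\<^bsub>R\<^esub>} \<and>
         (infinite (carrier R) \<or> 2 ^ (2 * card X + 3) \<le> card (carrier R))"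
proof -
  interpret near_hexagon_representation P L R r
    using assms(1,3) by (simp add: near_hexagon_representation_def slim_dense_near_hexagon_def
        near_hexagon_representation_axioms_def)
  note a = assms(5) and b = assms(6) and ab = assms(7)
  have "finite P" using assms(2) card_ge_0_finite by force
  have X: "x \<in> P" "col a x" "d b x = 2" if x: "x \<in> X" for x
  proof -
    obtain l where l: "l \<in> L" "a \<in> l" "x \<in> l" "d b x = 2" using assms(8,9) x by blast
    moreover have "x \<noteq> a" using l(4) ab gdist_sym[of L a b] by auto
    ultimately show "x \<in> P" "col a x" "d b x = 2" using line_subset collinearI by blast+
  qed
  let ?T = "r ` X"
  have T: "finite ?T" "?T \<subseteq> carrier R" "\<And>s. s \<in> ?T \<Longrightarrow> s \<otimes>\<^bsub>R\<^esub> s = \<one>\<^bsub>R\<^esub>"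
    and T_comm: "\<And>s u. s \<in> ?T \<Longrightarrow> u \<in> ?T \<Longrightarrow> s \<otimes>\<^bsub>R\<^esub> u = u \<otimes>\<^bsub>R\<^esub> s"
    and b_comm: "\<And>s. s \<in> ?T \<Longrightarrow> r b \<otimes>\<^bsub>R\<^esub> s = s \<otimes>\<^bsub>R\<^esub> r b"
    and a_comm: "\<And>s. s \<in> ?T \<Longrightarrow> r a \<otimes>\<^bsub>R\<^esub> s = s \<otimes>\<^bsub>R\<^esub> r a"
    using \<open>finite P\<close> finite_subset[of X P] X r_carrier r_involution
      common_neighbour_commute[OF X(2) X(2)] dist_le_2_commute[OF b] collinear_commute by auto
  have M: "{\<one>\<^bsub>R\<^esub>, r b} <#>\<^bsub>R\<^esub> generate R ?T = generate R (insert (r b) ?T)"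
      "card ({\<one>\<^bsub>R\<^esub>, r b} <#>\<^bsub>R\<^esub> generate R ?T) = 2 ^ (card X + 1)"
      "({\<one>\<^bsub>R\<^esub>, r b} <#>\<^bsub>R\<^esub> generate R ?T) \<inter> group_center R = {\<one>\<^bsub>R\<^esub>}"
    using R.extension_by_commuting_involution[OF T T_comm assms(11) r_carrier[OF b] r_involution[OF b]
        b_comm r_carrier[OF a] a_comm opposite_not_commute[OF assms(4) a b ab]] assms(10,12) by simp_all
  have sub: "insert (r b) ?T \<subseteq> carrier R" using T(2) r_carrier[OF b] by simp
  have "\<And>s u. s \<in> insert (r b) ?T \<Longrightarrow> u \<in> insert (r b) ?T \<Longrightarrow> s \<otimes>\<^bsub>R\<^esub> u = u \<otimes>\<^bsub>R\<^esub> s"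
    using T_comm b_comm by (metis insertE)
  then have "2 * card (generate R (insert (r b) ?T)) * card (generate R (insert (r b) ?T)) \<le> card (carrier R)"
    if "finite (carrier R)"
    using abelian_subgroup_card_bound[OF assms(4) that R.generate_is_subgroup[OF sub]
        R.generate_commute[OF sub] M(3)[unfolded M(1)]] by blast
  moreover have "2 * 2 ^ (card X + 1) * 2 ^ (card X + 1) = (2::nat) ^ (2 * card X + 3)"
    by (simp flip: power_add power_Suc)
  ultimately show ?thesis using M by auto
qed

end
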